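(* Let $(Z,d,\mu)$, $Q$, $X$ be as in the context, and let $0<s<\infty$, $Q/(Q+s)<p\le\infty$, $0<q\le\infty$. Then the operator \[ Tu(x):=\sum_{|y|\ge|x|,\ B(y)\cap B(x)\ne\emptyset}\frac{\mu(B(y))}{\mu(B(x))}u(y) \] is well-defined and bounded on $\mathcal I^s_{p,q}(X)$. Moreover, if $\Psi:X\to X$ is a map such that $B(\Psi(x))\cap B(x)\ne\emptyset$ for all $x$ and there is $\sigma\ge0$ with $||\Psi(x)|-|x||\le\sigma$ for all $x$, then $u\mapsto (Tu)\circ\Psi$ is also well-defined and bounded on $\mathcal I^s_{p,q}(X)$.
   Context: $(Z,d,\mu)$ is a metric measure space, $\mu$ Borel regular, every ball has positive finite measure, and $\mu$ is doubling. Fix constants $C\ge1$, $Q>0$ with $\mu(B(\xi,\lambda r)) \le C\lambda^Q\mu(B(\xi,r))$ for all $\xi\in Z$, $r>0$, $\lambda\ge1$. Hyperbolic filling: for each $n\in\mathbb Z$ let $(\xi_x)_{x\in X_n}$ be a maximal set of points of $Z$ with pairwise distances at least $2^{-n-1}$; $X=\bigsqcup_n X_n$, $|x|:=n$ for $x\in X_n$, $B(x):=B(\xi_x,2^{-n})$. $\mathcal I^s_{p,q}(X)$: sequences $u:X\to\mathbb C$ with $\|u\|_{\mathcal I^s_{p,q}(X)} := \big(\sum_{k\in\mathbb Z}2^{ksq}\|\sum_{x\in X_k}|u(x)|\chi_{B(x)}\|_{L^p(Z)}^q\big)^{1/q}<\infty$ (usual modification for $p$ or $q=\infty$). *)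

theory Defs
  imports "HOL-Analysis.Analysis" "HOL-Probability.Essential_Supremum"
begin

definition separated :: "real \<Rightarrow> 'a::metric_space set \<Rightarrow> bool" where
  "separated \<delta> A \<longleftrightarrow> (\<forall>a\<in>A. \<forall>b\<in>A. a \<noteq> b \<longrightarrow> \<delta> \<le> dist a b)"

definition maximal_separated :: "real \<Rightarrow> 'a::metric_space set \<Rightarrow> bool" where
  "maximal_separated \<delta> A \<longleftrightarrow> separated \<delta> A \<and> (\<forall>B. A \<subseteq> B \<and> separated \<delta> B \<longrightarrow> B = A)"

(* Vertex set X of the hyperbolic filling: a vertex x is a pair (n, xi_x) with xi_x in S n;
   |x| = fst x, xi_x = snd x *)
definition filling :: "(int \<Rightarrow> 'a set) \<Rightarrow> (int \<times> 'a) set" where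
  "filling S = Sigma UNIV S"

definition vball :: "int \<times> 'a::metric_space \<Rightarrow> 'a set" where
  "vball x = ball (snd x) (2 powr (- real_of_int (fst x)))"

(* x powr a on [0,\<infinity>], used only with a > 0 *)
definition epowr :: "ennreal \<Rightarrow> real \<Rightarrow> ennreal" where
  "epowr x a = (if x = top then top else ennreal (enn2real x powr a))"

definition Lp_qnorm :: "'a measure \<Rightarrow> ennreal \<Rightarrow> ('a \<Rightarrow> ennreal) \<Rightarrow> ennreal" where
  "Lp_qnorm M p f = (if p = top then esssup M f
     else epowr (\<integral>\<^sup>+ z. epowr (f z) (enn2real p) \<partial>M) (1 / enn2real p))"

definition level_fun :: "(int \<Rightarrow> 'a::metric_space set) \<Rightarrow> (int \<times> 'a \<Rightarrow> complex) \<Rightarrow> int \<Rightarrow> 'a \<Rightarrow> ennreal" where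
  "level_fun S u k = (\<lambda>z. \<integral>\<^sup>+ \<xi>. ennreal (cmod (u (k, \<xi>))) * indicator (vball (k, \<xi>)) z \<partial>count_space (S k))"

definition I_norm :: "'a::metric_space measure \<Rightarrow> (int \<Rightarrow> 'a set) \<Rightarrow> real \<Rightarrow> ennreal \<Rightarrow> ennreal
    \<Rightarrow> (int \<times> 'a \<Rightarrow> complex) \<Rightarrow> ennreal" where
  "I_norm M S s p q u =
     (let a = (\<lambda>k. Lp_qnorm M p (level_fun S u k)) in
      if q = top then (SUP k. ennreal (2 powr (real_of_int k * s)) * a k)
      else epowr (\<integral>\<^sup>+ k. ennreal (2 powr (real_of_int k * s * enn2real q)) * epowr (a k) (enn2real q)
                    \<partial>count_space UNIV) (1 / enn2real q))"

definition Tnbhd :: "(int \<Rightarrow> 'a::metric_space set) \<Rightarrow> int \<times> 'a \<Rightarrow> (int \<times> 'a) set" where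
  "Tnbhd S x = {y \<in> filling S. fst x \<le> fst y \<and> vball y \<inter> vball x \<noteq> {}}"

definition Tterm :: "'a::metric_space measure \<Rightarrow> (int \<times> 'a \<Rightarrow> complex) \<Rightarrow> int \<times> 'a \<Rightarrow> int \<times> 'a \<Rightarrow> complex" where
  "Tterm M u x y = complex_of_real (measure M (vball y) / measure M (vball x)) * u y"

(* Tu(x) (set to 0 off X, irrelevant for the norm) *)
definition T_op :: "'a::metric_space measure \<Rightarrow> (int \<Rightarrow> 'a set) \<Rightarrow> (int \<times> 'a \<Rightarrow> complex) \<Rightarrow> int \<times> 'a \<Rightarrow> complex" where
  "T_op M S u x = (if x \<in> filling S then infsum (Tterm M u x) (Tnbhd S x) else 0)"

end

theory Submission
  imports Defs
begin

text \<open>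
  Split \<open>|Tu(x)|\<close>, for \<open>|x| = k\<close>, into the contributions \<open>c\<^sub>j(x)\<close> of the levels \<open>j \<ge> k\<close>.
  A level-\<open>j\<close> ball meeting \<open>B(x)\<close> lies in a fixed dilate of \<open>B(x)\<close>, and each level is a
  separated set, so by doubling the balls of a level have bounded overlap. This gives the level
  estimate \<open>\<parallel>\<Sum>\<^sub>|x|=k c\<^sub>j(x) \<chi>\<^sub>B(x)\<parallel>\<^sub>p\<^sup>p \<lesssim> 2\<^sup>(j-k)\<rho> \<parallel>\<Sum>\<^sub>|y|=j |u(y)| \<chi>\<^sub>B(y)\<parallel>\<^sub>p\<^sup>p\<close>,
  with \<open>\<rho> = 0\<close> for \<open>p \<ge> 1\<close> (Jensen) and \<open>\<rho> = Q(1-p)\<close> for \<open>p < 1\<close> (\<open>p\<close>-subadditivity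
  together with \<open>\<mu>(B(x)) \<lesssim> 2\<^sup>(j-k)Q \<mu>(B(y))\<close>). The hypothesis \<open>p > Q/(Q+s)\<close> is exactly
  \<open>\<rho> < sp\<close>, so a discrete Hardy inequality sums the level estimates against the weights
  \<open>2\<^sup>ks\<close> in \<open>\<ell>\<^sup>q\<close>. The same pointwise bounds show that the series defining \<open>Tu\<close> converges
  absolutely. Finally \<open>|v(\<Psi>(x))|\<close> is dominated by an operator of the same kind that reaches
  \<open>\<lceil>\<sigma>\<rceil>\<close> levels below \<open>|x|\<close>, which the level estimate also covers; apply it to \<open>v = Tu\<close>.
\<close>

section \<open>Power inequalities for finite sums\<close>

lemma sum_powr_le_powr_sum:
  fixes b :: "'i \<Rightarrow> real"
  assumes "finite A" "\<And>i. i \<in> A \<Longrightarrow> 0 \<le> b i" "1 \<le> P"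
  shows "(\<Sum>i\<in>A. b i powr P) \<le> (\<Sum>i\<in>A. b i) powr P"
proof -
  define T where "T = (\<Sum>i\<in>A. b i)"
  have T: "0 \<le> T" using assms by (simp add: T_def sum_nonneg)
  have bi: "b i \<le> T" if "i \<in> A" for i
    unfolding T_def using assms that by (intro member_le_sum) auto
  have "(\<Sum>i\<in>A. b i powr P) \<le> (\<Sum>i\<in>A. b i * T powr (P - 1))"
  proof (rule sum_mono)
    fix i assume i: "i \<in> A"
    show "b i powr P \<le> b i * T powr (P - 1)"
    proof (cases "b i = 0")
      case False
      then have "b i powr P = b i * b i powr (P - 1)" using assms i
        by (simp add: powr_diff)
      also have "\<dots> \<le> b i * T powr (P - 1)"
        using assms i bi False by (intro mult_left_mono powr_mono2) auto
      finally show ?thesis .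
    qed (use assms in simp)
  qed
  also have "\<dots> = T * T powr (P - 1)" by (simp add: T_def sum_distrib_right)
  also have "\<dots> = T powr P"
    using T assms by (cases "T = 0") (auto simp: powr_diff)
  finally show ?thesis by (simp add: T_def)
qed

lemma powr_sum_le_sum_powr:
  fixes b :: "'i \<Rightarrow> real"
  assumes "finite A" "\<And>i. i \<in> A \<Longrightarrow> 0 \<le> b i" "0 < P" "P \<le> 1"
  shows "(\<Sum>i\<in>A. b i) powr P \<le> (\<Sum>i\<in>A. b i powr P)"
proof -
  define T where "T = (\<Sum>i\<in>A. b i)"
  have bi: "b i \<le> T" if "i \<in> A" for i
    unfolding T_def using assms that by (intro member_le_sum) auto
  show ?thesis
  proof (cases "T = 0")
    case True then show ?thesis using assms by (simp add: T_def sum_nonneg)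
  next
    case False
    then have Tp: "0 < T" using assms by (simp add: T_def sum_nonneg order_le_neq_trans)
    have "T powr P = T * T powr (P - 1)" using Tp by (simp add: powr_diff)
    also have "\<dots> = (\<Sum>i\<in>A. b i * T powr (P - 1))" by (simp add: T_def sum_distrib_right)
    also have "\<dots> \<le> (\<Sum>i\<in>A. b i powr P)"
    proof (rule sum_mono)
      fix i assume i: "i \<in> A"
      show "b i * T powr (P - 1) \<le> b i powr P"
      proof (cases "b i = 0")
        case False
        then have bp: "0 < b i" using assms i by (simp add: less_le)
        have "b i * T powr (P - 1) \<le> b i * b i powr (P - 1)"
          using assms bp bi i by (intro mult_left_mono powr_mono2') auto
        also have "\<dots> = b i powr P" using bp by (simp add: powr_diff)
        finally show ?thesis .
      qed simp
    qed
    finally show ?thesis by (simp add: T_def)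
  qed
qed

lemma powr_sum_le_card_powr_sum_powr:
  fixes b :: "'i \<Rightarrow> real"
  assumes "finite A" "\<And>i. i \<in> A \<Longrightarrow> 0 \<le> b i" "0 < P"
  shows "(\<Sum>i\<in>A. b i) powr P \<le> real (card A) powr P * (\<Sum>i\<in>A. b i powr P)"
proof -
  define T where "T = (\<Sum>i\<in>A. b i powr P)"
  have T: "0 \<le> T" using assms by (simp add: T_def sum_nonneg)
  have "b i \<le> T powr (1/P)" if i: "i \<in> A" for i
  proof -
    have "b i powr P \<le> T" unfolding T_def using assms i by (intro member_le_sum) auto
    then have "(b i powr P) powr (1/P) \<le> T powr (1/P)" using assms i by (intro powr_mono2) auto
    then show ?thesis using assms i by (simp add: powr_powr)
  qed
  then have "(\<Sum>i\<in>A. b i) \<le> real (card A) * T powr (1/P)"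
    using sum_mono[of A b "\<lambda>_. T powr (1/P)"] by simp
  then have "(\<Sum>i\<in>A. b i) powr P \<le> (real (card A) * T powr (1/P)) powr P"
    using assms by (intro powr_mono2) (auto intro: sum_nonneg)
  also have "\<dots> = real (card A) powr P * T"
    using T assms by (simp add: powr_mult powr_powr)
  finally show ?thesis by (simp add: T_def)
qed

lemma convex_on_powr_nonneg:
  assumes "1 \<le> p"
  shows "convex_on {0..} (\<lambda>x::real. x powr p)"
proof (rule convex_onI)
  fix t x y :: real assume t: "0 < t" "t < 1" and x: "x \<in> {0..}" and y: "y \<in> {0..}"
  have sub_id: "s powr p \<le> s" if "0 \<le> s" "s \<le> 1" for s :: real
    using that assms powr_mono'[of 1 p s] by (cases "s = 0") auto
  show "((1 - t) *\<^sub>R x + t *\<^sub>R y) powr p \<le> (1 - t) * x powr p + t * y powr p"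
  proof (cases "x = 0 \<or> y = 0")
    case False
    then have "x \<in> {0<..}" "y \<in> {0<..}" using x y by auto
    then show ?thesis using convex_onD[OF powr_convex[OF assms], of t x y] t by simp
  next
    case True
    then show ?thesis
    proof
      assume "x = 0"
      moreover have "t powr p * y powr p \<le> t * y powr p"
        using sub_id[of t] t by (intro mult_right_mono) auto
      ultimately show ?thesis using t y assms by (simp add: powr_mult)
    next
      assume "y = 0"
      moreover have "(1 - t) powr p * x powr p \<le> (1 - t) * x powr p"
        using sub_id[of "1 - t"] t by (intro mult_right_mono) auto
      ultimately show ?thesis using t x assms by (simp add: powr_mult)
    qed
  qed
qed (rule convex_real_interval)

lemma powr_weighted_sum_le:
  fixes w a :: "'i \<Rightarrow> real"
  assumes A: "finite A" and w: "\<And>i. i \<in> A \<Longrightarrow> 0 \<le> w i" and a: "\<And>i. i \<in> A \<Longrightarrow> 0 \<le> a i"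
    and P: "1 \<le> P"
  shows "(\<Sum>i\<in>A. w i * a i) powr P \<le> (\<Sum>i\<in>A. w i) powr (P - 1) * (\<Sum>i\<in>A. w i * a i powr P)"
proof -
  define W where "W = (\<Sum>i\<in>A. w i)"
  show ?thesis
  proof (cases "W = 0")
    case True
    then have "\<forall>i\<in>A. w i = 0" using A w unfolding W_def by (simp add: sum_nonneg_eq_0_iff)
    then show ?thesis by simp
  next
    case False
    then have Wp: "0 < W" using w by (simp add: W_def sum_nonneg order_le_neq_trans)
    then have "A \<noteq> {}" unfolding W_def by auto
    then have "(\<Sum>i\<in>A. (w i / W) *\<^sub>R a i) powr P \<le> (\<Sum>i\<in>A. (w i / W) * a i powr P)"
      using convex_on_sum[OF A _ convex_on_powr_nonneg[OF P], of "\<lambda>i. w i / W" a] w a Wp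
      by (auto simp: sum_divide_distrib[symmetric] W_def)
    then have "(\<Sum>i\<in>A. w i * a i) powr P / W powr P \<le> (\<Sum>i\<in>A. w i * a i powr P) / W"
      using Wp w a by (simp add: sum_divide_distrib[symmetric] powr_divide sum_nonneg)
    then have "(\<Sum>i\<in>A. w i * a i) powr P \<le> (\<Sum>i\<in>A. w i * a i powr P) / W * W powr P"
      using Wp by (simp add: divide_le_eq)
    also have "\<dots> = W powr (P - 1) * (\<Sum>i\<in>A. w i * a i powr P)"
      using Wp by (simp add: powr_diff)
    finally show ?thesis by (simp add: W_def)
  qed
qed

section \<open>Powers on \<open>[0, \<infinity>]\<close> and geometric sums\<close>

lemma epowr_ennreal: "0 \<le> x \<Longrightarrow> epowr (ennreal x) a = ennreal (x powr a)"
  by (simp add: epowr_def)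

lemma epowr_top [simp]: "epowr top a = top"
  by (simp add: epowr_def)

lemma epowr_zero [simp]: "epowr 0 a = 0"
  by (simp add: epowr_def)

lemma epowr_one [simp]: "epowr x 1 = x"
  by (cases x) (auto simp: epowr_def)

lemma epowr_mono:
  assumes "x \<le> y" "0 \<le> a"
  shows "epowr x a \<le> epowr y a"
proof (cases "y = top")
  case False
  then have "x \<noteq> top" using assms top_unique by auto
  with False assms show ?thesis
    by (auto simp: epowr_def less_top[symmetric] intro!: ennreal_leI powr_mono2 enn2real_mono)
qed simp

lemma epowr_epowr: "0 < a \<Longrightarrow> epowr (epowr x a) b = epowr x (a * b)"
  by (cases "x = top") (simp_all add: epowr_def powr_powr)

lemma epowr_epowr_inverse: "0 < a \<Longrightarrow> epowr (epowr x a) (1/a) = x"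
  by (simp add: epowr_epowr)

lemma epowr_inverse_epowr: "0 < a \<Longrightarrow> epowr (epowr x (1/a)) a = x"
  by (simp add: epowr_epowr)

lemma epowr_mult: "epowr (x * y) a = epowr x a * epowr y a"
proof (cases "x = top \<or> y = top")
  case True
  have nonzero: "epowr z a \<noteq> 0" if "z \<noteq> 0" for z
    using that by (cases "z = top") (auto simp: epowr_def enn2real_eq_0_iff)
  from True show ?thesis
    by (cases "x = 0"; cases "y = 0") (auto dest: nonzero simp: ennreal_top_mult ennreal_mult_top)
next
  case False
  then obtain x' y' where "x = ennreal x'" "y = ennreal y'" "0 \<le> x'" "0 \<le> y'"
    by (metis ennreal_cases top.not_eq_extremum)
  then show ?thesis
    by (simp add: epowr_ennreal ennreal_mult[symmetric] powr_mult)
qed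

lemma epowr_le_iff: "0 < a \<Longrightarrow> epowr x a \<le> epowr y a \<longleftrightarrow> x \<le> y"
  by (metis epowr_epowr_inverse epowr_mono less_le_not_le zero_le_divide_1_iff)

lemma epowr_pow2_mult: "epowr (ennreal (2 powr x) * a) r = ennreal (2 powr (x * r)) * epowr a r"
  by (simp add: epowr_mult epowr_ennreal powr_powr)

lemma nn_integral_weighted_le:
  fixes w f :: "'i \<Rightarrow> ennreal"
  assumes b: "0 < b"
  shows "(\<integral>\<^sup>+j. w j * f j \<partial>count_space I)
     \<le> (\<integral>\<^sup>+j. w j \<partial>count_space I) * epowr (\<integral>\<^sup>+i. epowr (f i) b \<partial>count_space I) (1/b)"
proof -
  let ?\<Phi> = "epowr (\<integral>\<^sup>+i. epowr (f i) b \<partial>count_space I) (1/b)"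
  have "(\<integral>\<^sup>+j. w j * f j \<partial>count_space I) \<le> (\<integral>\<^sup>+j. w j * ?\<Phi> \<partial>count_space I)"
  proof (rule nn_integral_mono)
    fix j assume "j \<in> space (count_space I)"
    then have "f j = epowr (epowr (f j) b) (1/b)" and "epowr (f j) b \<le> (\<integral>\<^sup>+i. epowr (f i) b \<partial>count_space I)"
      using b by (simp_all add: epowr_epowr_inverse nn_integral_ge_point[where p="\<lambda>i. epowr (f i) b"])
    then have "f j \<le> ?\<Phi>" using b by (metis epowr_mono less_eq_real_def zero_le_divide_1_iff)
    then show "w j * f j \<le> w j * ?\<Phi>" by (rule mult_left_mono) auto
  qed
  also have "\<dots> = (\<integral>\<^sup>+j. w j \<partial>count_space I) * ?\<Phi>"
    by (rule nn_integral_multc) simp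
  finally show ?thesis .
qed

definition geom_const :: "real \<Rightarrow> nat \<Rightarrow> real" where
  "geom_const c m = 2 powr (real m * c) / (1 - 2 powr (- c))"

lemma geom_const_pos: "0 < c \<Longrightarrow> 0 < geom_const c m"
  unfolding geom_const_def by (auto intro!: divide_pos_pos simp: powr_minus_divide)

lemma suminf_geometric_ennreal:
  assumes c: "0 < c"
  shows "(\<Sum>n. ennreal (2 powr (real m * c) * (2 powr (- c)) ^ n)) = ennreal (geom_const c m)"
proof -
  have "norm (2 powr (- c)) < (1::real)" using c by (simp add: powr_minus_divide)
  from sums_mult[OF geometric_sums[OF this], of "2 powr (real m * c)"] show ?thesis
    unfolding geom_const_def by (subst suminf_ennreal_eq) auto
qed

lemma nn_integral_geometric_atLeast:
  assumes c: "0 < c"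
  shows "(\<integral>\<^sup>+j. ennreal (2 powr (- c * real_of_int (j - k))) \<partial>count_space {k - int m..})
    = ennreal (geom_const c m)"
proof -
  have bij: "bij_betw (\<lambda>n::nat. k - int m + int n) UNIV {k - int m..}"
    by (rule bij_betwI[where g="\<lambda>j. nat (j - (k - int m))"]) auto
  have "(\<integral>\<^sup>+j. ennreal (2 powr (- c * real_of_int (j - k))) \<partial>count_space {k - int m..})
      = (\<integral>\<^sup>+n. ennreal (2 powr (- c * real_of_int ((k - int m + int n) - k))) \<partial>count_space UNIV)"
    by (rule nn_integral_bij_count_space[OF bij, symmetric])
  also have "\<dots> = (\<Sum>n. ennreal (2 powr (real m * c) * (2 powr (- c)) ^ n))"
    by (subst nn_integral_count_space_nat)
      (auto intro!: suminf_cong arg_cong[where f=ennreal]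
        simp: powr_realpow[symmetric] powr_powr powr_add[symmetric] algebra_simps)
  finally show ?thesis using suminf_geometric_ennreal[OF c] by simp
qed

lemma nn_integral_geometric_atMost:
  assumes c: "0 < c"
  shows "(\<integral>\<^sup>+k. ennreal (2 powr (- c * real_of_int (j - k))) \<partial>count_space {..j + int m})
    = ennreal (geom_const c m)"
proof -
  have bij: "bij_betw (\<lambda>n::nat. j + int m - int n) UNIV {..j + int m}"
    by (rule bij_betwI[where g="\<lambda>k. nat (j + int m - k)"]) auto
  have "(\<integral>\<^sup>+k. ennreal (2 powr (- c * real_of_int (j - k))) \<partial>count_space {..j + int m})
      = (\<integral>\<^sup>+n. ennreal (2 powr (- c * real_of_int (j - (j + int m - int n)))) \<partial>count_space UNIV)"
    by (rule nn_integral_bij_count_space[OF bij, symmetric])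
  also have "\<dots> = (\<Sum>n. ennreal (2 powr (real m * c) * (2 powr (- c)) ^ n))"
    by (subst nn_integral_count_space_nat)
      (auto intro!: suminf_cong arg_cong[where f=ennreal]
        simp: powr_realpow[symmetric] powr_powr powr_add[symmetric] algebra_simps)
  finally show ?thesis using suminf_geometric_ennreal[OF c] by simp
qed

lemma nn_integral_geometric_convolution:
  fixes f :: "int \<Rightarrow> ennreal"
  assumes c: "0 < c"
  shows "(\<integral>\<^sup>+k. \<integral>\<^sup>+j. ennreal (2 powr (- c * real_of_int (j - k))) * f j \<partial>count_space {k - int m..}
      \<partial>count_space UNIV) = ennreal (geom_const c m) * (\<integral>\<^sup>+j. f j \<partial>count_space UNIV)"
proof -
  define h where "h k j = ennreal (2 powr (- c * real_of_int (j - k))) * f j" for k j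
  have "(\<integral>\<^sup>+k. \<integral>\<^sup>+j. h k j \<partial>count_space {k - int m..} \<partial>count_space UNIV)
      = (\<integral>\<^sup>+k. \<integral>\<^sup>+j. h k j * indicator {k - int m..} j \<partial>count_space UNIV \<partial>count_space UNIV)"
    by (simp add: nn_integral_count_space_indicator)
  also have "\<dots> = (\<integral>\<^sup>+j. \<integral>\<^sup>+k. h k j * indicator {k - int m..} j \<partial>count_space UNIV \<partial>count_space UNIV)"
    by (rule nn_integral_count_space_nn_integral[symmetric]) auto
  also have "\<dots> = (\<integral>\<^sup>+j. \<integral>\<^sup>+k. h k j \<partial>count_space {..j + int m} \<partial>count_space UNIV)"
    by (intro nn_integral_cong) (auto simp: nn_integral_count_space_indicator indicator_def
        intro!: nn_integral_cong)
  also have "\<dots> = (\<integral>\<^sup>+j. ennreal (geom_const c m) * f j \<partial>count_space UNIV)"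
    unfolding h_def using nn_integral_geometric_atMost[OF c]
    by (intro nn_integral_cong) (simp add: nn_integral_multc)
  finally show ?thesis by (simp add: h_def nn_integral_cmult)
qed

lemma epowr_nn_integral_le_geometric_weighted:
  fixes g :: "int \<Rightarrow> real"
  assumes P: "0 < P" and \<tau>: "0 < \<tau>" and g: "\<And>j. 0 \<le> g j"
  shows "epowr (\<integral>\<^sup>+j. ennreal (g j) \<partial>count_space {k - int m..}) P
    \<le> ennreal (geom_const \<tau> m powr P) *
      (\<integral>\<^sup>+j. ennreal (2 powr (real_of_int (j - k) * (\<tau> * P))) * ennreal (g j powr P) \<partial>count_space {k - int m..})"
proof -
  define I where "I = (\<integral>\<^sup>+j. ennreal (2 powr (real_of_int (j - k) * (\<tau> * P))) * ennreal (g j powr P)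
    \<partial>count_space {k - int m..})"
  have "(\<integral>\<^sup>+j. ennreal (g j) \<partial>count_space {k - int m..})
      = (\<integral>\<^sup>+j. ennreal (2 powr (- \<tau> * real_of_int (j - k))) *
          (ennreal (2 powr (real_of_int (j - k) * \<tau>)) * ennreal (g j)) \<partial>count_space {k - int m..})"
    by (intro nn_integral_cong) (simp add: mult.assoc[symmetric] ennreal_mult[symmetric] powr_add[symmetric])
  also have "\<dots> \<le> ennreal (geom_const \<tau> m) * epowr (\<integral>\<^sup>+j. epowr (ennreal (2 powr (real_of_int (j - k) * \<tau>))
      * ennreal (g j)) P \<partial>count_space {k - int m..}) (1/P)"
    using nn_integral_weighted_le[OF P, where w="\<lambda>j. ennreal (2 powr (- \<tau> * real_of_int (j - k)))"
        and f="\<lambda>j. ennreal (2 powr (real_of_int (j - k) * \<tau>)) * ennreal (g j)" and I="{k - int m..}"]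
    unfolding nn_integral_geometric_atLeast[OF \<tau>] .
  also have "(\<integral>\<^sup>+j. epowr (ennreal (2 powr (real_of_int (j - k) * \<tau>)) * ennreal (g j)) P
      \<partial>count_space {k - int m..}) = I"
    unfolding I_def by (intro nn_integral_cong) (simp add: epowr_pow2_mult epowr_ennreal g mult.assoc)
  finally have "epowr (\<integral>\<^sup>+j. ennreal (g j) \<partial>count_space {k - int m..}) P
      \<le> epowr (ennreal (geom_const \<tau> m) * epowr I (1/P)) P"
    by (rule epowr_mono) (use P in simp)
  also have "\<dots> = ennreal (geom_const \<tau> m powr P) * I"
    using P geom_const_pos[OF \<tau>, of m] by (simp add: epowr_mult epowr_ennreal epowr_inverse_epowr)
  finally show ?thesis by (simp add: I_def)
qed

section \<open>Weighted \<open>\<ell>\<^sup>q\<close> norms and a discrete Hardy inequality\<close>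

definition seq_qnorm :: "real \<Rightarrow> ennreal \<Rightarrow> (int \<Rightarrow> ennreal) \<Rightarrow> ennreal" where
  "seq_qnorm s q a = (if q = top then (SUP k. ennreal (2 powr (real_of_int k * s)) * a k)
      else epowr (\<integral>\<^sup>+ k. ennreal (2 powr (real_of_int k * s * enn2real q)) * epowr (a k) (enn2real q)
                    \<partial>count_space UNIV) (1 / enn2real q))"

lemma I_norm_eq_seq_qnorm: "I_norm M S s p q u = seq_qnorm s q (\<lambda>k. Lp_qnorm M p (level_fun S u k))"
  by (simp add: I_norm_def seq_qnorm_def Let_def)

lemma seq_qnorm_finite_eq:
  assumes "q \<noteq> top"
  shows "seq_qnorm s q a = epowr (\<integral>\<^sup>+ k. epowr (ennreal (2 powr (real_of_int k * s)) * a k) (enn2real q)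
    \<partial>count_space UNIV) (1 / enn2real q)"
  using assms by (simp add: seq_qnorm_def epowr_pow2_mult)

lemma seq_qnorm_term_le:
  assumes q: "0 < q"
  shows "ennreal (2 powr (real_of_int j * s)) * a j \<le> seq_qnorm s q a"
proof (cases "q = top")
  case True
  then show ?thesis
    using SUP_upper[of j UNIV "\<lambda>k. ennreal (2 powr (real_of_int k * s)) * a k"] by (simp add: seq_qnorm_def)
next
  case False
  define r where "r = enn2real q"
  have r: "0 < r" using q False by (simp add: r_def enn2real_positive_iff less_top[symmetric])
  have "ennreal (2 powr (real_of_int j * s)) * a j
      = epowr (epowr (ennreal (2 powr (real_of_int j * s)) * a j) r) (1/r)"
    using r by (simp add: epowr_epowr_inverse)
  also have "\<dots> \<le> epowr (\<integral>\<^sup>+ k. epowr (ennreal (2 powr (real_of_int k * s)) * a k) r \<partial>count_space UNIV) (1/r)"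
    by (rule epowr_mono[OF nn_integral_ge_point]) (use r in auto)
  also have "\<dots> = seq_qnorm s q a" using False by (simp add: seq_qnorm_finite_eq r_def)
  finally show ?thesis .
qed

text \<open>
  The Hardy lemmas below are stated for \<open>b\<^sub>k = 2\<^sup>ks a\<^sub>k\<close>, for which the weight \<open>2\<^sup>(j-k)\<rho>\<close>
  of the level estimates becomes the decaying kernel \<open>2\<^sup>-e(j-k)\<close>, \<open>e = sP - \<rho>\<close>
  (see \<open>hardy_hyp_rescale\<close>).
\<close>

lemma hardy_sup:
  fixes b b' :: "int \<Rightarrow> ennreal"
  assumes P: "0 < P" and K: "0 \<le> K" and e: "0 < e"
    and hyp: "\<And>k. epowr (b' k) P \<le> ennreal K *
        (\<integral>\<^sup>+ j. ennreal (2 powr (- e * real_of_int (j - k))) * epowr (b j) P \<partial>count_space {k - int m..})"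
  shows "b' k \<le> ennreal ((K * geom_const e m) powr (1/P)) * (SUP j. b j)"
proof -
  define B where "B = (SUP j. b j)"
  have "epowr (b' k) P \<le> ennreal K *
      (\<integral>\<^sup>+ j. ennreal (2 powr (- e * real_of_int (j - k))) * epowr B P \<partial>count_space {k - int m..})"
    by (rule order_trans[OF hyp]) (auto intro!: mult_left_mono nn_integral_mono epowr_mono
        simp: B_def SUP_upper P less_imp_le)
  also have "\<dots> = ennreal K * (ennreal (geom_const e m) * epowr B P)"
    by (subst nn_integral_multc) (simp, simp only: nn_integral_geometric_atLeast[OF e])
  also have "\<dots> = epowr (ennreal ((K * geom_const e m) powr (1/P)) * B) P"
    using geom_const_pos[OF e, of m] P K
    by (simp add: epowr_mult epowr_ennreal powr_powr ennreal_mult mult.assoc)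
  finally show ?thesis using epowr_le_iff[OF P] by (simp add: B_def)
qed

lemma hardy_step:
  fixes b b' :: "int \<Rightarrow> ennreal"
  assumes P: "0 < P" and K: "0 \<le> K" and e: "0 < e" and r: "0 < r"
    and hyp: "epowr (b' k) P \<le> ennreal K *
        (\<integral>\<^sup>+ j. ennreal (2 powr (- e * real_of_int (j - k))) * epowr (b j) P \<partial>count_space {k - int m..})"
  shows "epowr (b' k) r \<le> ennreal ((K * geom_const (e/2) m) powr (r/P)) *
      (\<integral>\<^sup>+ j. ennreal (2 powr (- (e * (r/P) / 2) * real_of_int (j - k))) * epowr (b j) r \<partial>count_space {k - int m..})"
proof -
  define \<beta> where "\<beta> = r / P"
  have \<beta>: "0 < \<beta>" using r P by (simp add: \<beta>_def)
  define W where "W = geom_const (e/2) m"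
  have W: "0 < W" using geom_const_pos e by (simp add: W_def)
  define w where "w j = ennreal (2 powr (- (e/2) * real_of_int (j - k)))" for j
  define I where "I = (\<integral>\<^sup>+ j. ennreal (2 powr (- (e * \<beta> / 2) * real_of_int (j - k))) * epowr (b j) r
    \<partial>count_space {k - int m..})"
  have "(\<integral>\<^sup>+ j. ennreal (2 powr (- e * real_of_int (j - k))) * epowr (b j) P \<partial>count_space {k - int m..})
      = (\<integral>\<^sup>+ j. w j * (w j * epowr (b j) P) \<partial>count_space {k - int m..})"
    by (intro nn_integral_cong)
      (simp add: w_def mult.assoc[symmetric] ennreal_mult[symmetric] powr_add[symmetric])
  also have "\<dots> \<le> ennreal W * epowr (\<integral>\<^sup>+ j. epowr (w j * epowr (b j) P) \<beta> \<partial>count_space {k - int m..}) (1/\<beta>)"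
    using nn_integral_weighted_le[OF \<beta>, where w=w and f="\<lambda>j. w j * epowr (b j) P" and I="{k - int m..}"]
    unfolding w_def nn_integral_geometric_atLeast[OF half_gt_zero[OF e]] W_def .
  also have "(\<integral>\<^sup>+ j. epowr (w j * epowr (b j) P) \<beta> \<partial>count_space {k - int m..}) = I"
    unfolding I_def
  proof (intro nn_integral_cong)
    fix j
    have "epowr (w j * epowr (b j) P) \<beta>
        = ennreal (2 powr (- (e/2) * real_of_int (j - k) * \<beta>)) * epowr (b j) (P * \<beta>)"
      by (simp add: w_def epowr_pow2_mult epowr_epowr[OF P])
    also have "P * \<beta> = r" using P by (simp add: \<beta>_def)
    also have "- (e/2) * real_of_int (j - k) * \<beta> = - (e * \<beta> / 2) * real_of_int (j - k)" by simp
    finally show "epowr (w j * epowr (b j) P) \<beta>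
        = ennreal (2 powr (- (e * \<beta> / 2) * real_of_int (j - k))) * epowr (b j) r" .
  qed
  finally have "epowr (b' k) P \<le> ennreal K * (ennreal W * epowr I (1/\<beta>))"
    using hyp by (meson dual_order.trans mult_left_mono zero_le)
  then have "epowr (epowr (b' k) P) \<beta> \<le> epowr (ennreal K * (ennreal W * epowr I (1/\<beta>))) \<beta>"
    by (rule epowr_mono) (use \<beta> in simp)
  also have "\<dots> = ennreal ((K * W) powr \<beta>) * I"
    using K W \<beta> by (simp add: epowr_mult epowr_ennreal epowr_epowr powr_mult ennreal_mult mult.assoc)
  finally show ?thesis using P by (simp add: epowr_epowr \<beta>_def W_def I_def)
qed

lemma hardy_sum:
  fixes b b' :: "int \<Rightarrow> ennreal"
  assumes P: "0 < P" and K: "0 \<le> K" and e: "0 < e" and r: "0 < r"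
    and hyp: "\<And>k. epowr (b' k) P \<le> ennreal K *
        (\<integral>\<^sup>+ j. ennreal (2 powr (- e * real_of_int (j - k))) * epowr (b j) P \<partial>count_space {k - int m..})"
  shows "(\<integral>\<^sup>+ k. epowr (b' k) r \<partial>count_space UNIV) \<le>
    ennreal ((K * geom_const (e/2) m) powr (r/P) * geom_const (e * (r/P) / 2) m) *
    (\<integral>\<^sup>+ j. epowr (b j) r \<partial>count_space UNIV)"
proof -
  have c: "0 < e * (r/P) / 2" using e r P by simp
  have "(\<integral>\<^sup>+ k. epowr (b' k) r \<partial>count_space UNIV) \<le> (\<integral>\<^sup>+ k. ennreal ((K * geom_const (e/2) m) powr (r/P)) *
      (\<integral>\<^sup>+ j. ennreal (2 powr (- (e * (r/P) / 2) * real_of_int (j - k))) * epowr (b j) r \<partial>count_space {k - int m..})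
      \<partial>count_space UNIV)"
    by (intro nn_integral_mono hardy_step[OF P K e r hyp])
  also have "\<dots> = ennreal ((K * geom_const (e/2) m) powr (r/P)) * (\<integral>\<^sup>+ k.
      \<integral>\<^sup>+ j. ennreal (2 powr (- (e * (r/P) / 2) * real_of_int (j - k))) * epowr (b j) r \<partial>count_space {k - int m..}
      \<partial>count_space UNIV)"
    by (rule nn_integral_cmult) simp
  also have "\<dots> = ennreal ((K * geom_const (e/2) m) powr (r/P)) *
      (ennreal (geom_const (e * (r/P) / 2) m) * (\<integral>\<^sup>+ j. epowr (b j) r \<partial>count_space UNIV))"
    by (simp only: nn_integral_geometric_convolution[OF c])
  finally show ?thesis
    using geom_const_pos[OF c, of m] by (simp add: ennreal_mult mult.assoc)
qed

definition hardy_const :: "real \<Rightarrow> ennreal \<Rightarrow> real \<Rightarrow> real \<Rightarrow> real \<Rightarrow> nat \<Rightarrow> real" where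
  "hardy_const s q P K \<rho> m = (if q = top then (K * geom_const (s * P - \<rho>) m) powr (1/P)
     else ((K * geom_const ((s * P - \<rho>)/2) m) powr (enn2real q / P)
       * geom_const ((s * P - \<rho>) * (enn2real q / P) / 2) m) powr (1 / enn2real q))"

lemma hardy_hyp_rescale:
  fixes a a' :: "int \<Rightarrow> ennreal"
  assumes hyp: "epowr (a' k) P \<le> ennreal K *
      (\<integral>\<^sup>+ j. ennreal (2 powr (real_of_int (j - k) * \<rho>)) * epowr (a j) P \<partial>count_space {k - int m..})"
  shows "epowr (ennreal (2 powr (real_of_int k * s)) * a' k) P \<le> ennreal K *
      (\<integral>\<^sup>+ j. ennreal (2 powr (- (s * P - \<rho>) * real_of_int (j - k))) *
        epowr (ennreal (2 powr (real_of_int j * s)) * a j) P \<partial>count_space {k - int m..})"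
proof -
  have weights: "ennreal (2 powr (real_of_int k * s * P)) * (ennreal (2 powr (real_of_int (j - k) * \<rho>)) * epowr (a j) P)
      = ennreal (2 powr (- (s * P - \<rho>) * real_of_int (j - k))) *
        epowr (ennreal (2 powr (real_of_int j * s)) * a j) P" for j
  proof -
    have "2 powr (real_of_int k * s * P) * 2 powr (real_of_int (j - k) * \<rho>)
        = 2 powr (- (s * P - \<rho>) * real_of_int (j - k)) * (2::real) powr (real_of_int j * s * P)"
      by (simp add: powr_add[symmetric] algebra_simps)
    then show ?thesis
      by (simp add: epowr_pow2_mult mult.assoc[symmetric] ennreal_mult[symmetric])
  qed
  have "epowr (ennreal (2 powr (real_of_int k * s)) * a' k) P \<le> ennreal (2 powr (real_of_int k * s * P)) *
      (ennreal K * (\<integral>\<^sup>+ j. ennreal (2 powr (real_of_int (j - k) * \<rho>)) * epowr (a j) P \<partial>count_space {k - int m..}))"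
    unfolding epowr_pow2_mult by (rule mult_left_mono[OF hyp]) simp
  also have "\<dots> = ennreal K * (\<integral>\<^sup>+ j. ennreal (2 powr (real_of_int k * s * P)) *
      (ennreal (2 powr (real_of_int (j - k) * \<rho>)) * epowr (a j) P) \<partial>count_space {k - int m..})"
    by (subst nn_integral_cmult) (auto simp: mult_ac)
  finally show ?thesis by (simp only: weights)
qed

lemma seq_qnorm_hardy:
  fixes a a' :: "int \<Rightarrow> ennreal"
  assumes P: "0 < P" and K: "0 \<le> K" and \<rho>: "\<rho> < s * P" and q: "0 < q"
    and hyp: "\<And>k. epowr (a' k) P \<le> ennreal K *
        (\<integral>\<^sup>+ j. ennreal (2 powr (real_of_int (j - k) * \<rho>)) * epowr (a j) P \<partial>count_space {k - int m..})"
  shows "seq_qnorm s q a' \<le> ennreal (hardy_const s q P K \<rho> m) * seq_qnorm s q a"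
proof -
  define e where "e = s * P - \<rho>"
  have e: "0 < e" using \<rho> by (simp add: e_def)
  define b where "b j = ennreal (2 powr (real_of_int j * s)) * a j" for j
  define b' where "b' j = ennreal (2 powr (real_of_int j * s)) * a' j" for j
  have hyp_b: "epowr (b' k) P \<le> ennreal K *
      (\<integral>\<^sup>+ j. ennreal (2 powr (- e * real_of_int (j - k))) * epowr (b j) P \<partial>count_space {k - int m..})" for k
    unfolding b_def b'_def e_def by (rule hardy_hyp_rescale[OF hyp])
  show ?thesis
  proof (cases "q = top")
    case True
    then show ?thesis
      using hardy_sup[OF P K e hyp_b]
      by (simp add: seq_qnorm_def hardy_const_def e_def SUP_least flip: b_def b'_def)
  next
    case False
    define r where "r = enn2real q"
    have r: "0 < r" using q False by (simp add: r_def enn2real_positive_iff less_top[symmetric])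
    define G where "G = (K * geom_const (e/2) m) powr (r/P) * geom_const (e * (r/P) / 2) m"
    have G: "0 \<le> G" using geom_const_pos[of "e * (r/P) / 2" m] e r P by (simp add: G_def)
    have "seq_qnorm s q a' \<le> epowr (ennreal G * (\<integral>\<^sup>+ j. epowr (b j) r \<partial>count_space UNIV)) (1/r)"
      unfolding seq_qnorm_finite_eq[OF False] r_def[symmetric] b'_def[symmetric]
      by (rule epowr_mono[OF hardy_sum[OF P K e r hyp_b, folded G_def]]) (use r in simp)
    also have "\<dots> = ennreal (G powr (1/r)) * seq_qnorm s q a"
      unfolding seq_qnorm_finite_eq[OF False] r_def[symmetric] b_def[symmetric]
      using G by (simp add: epowr_mult epowr_ennreal)
    finally show ?thesis using False by (simp add: hardy_const_def G_def e_def r_def)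
  qed
qed

section \<open>Sums over countable index sets\<close>

lemma summable_on_and_norm_infsum_le_nn_integral:
  fixes f :: "'b \<Rightarrow> complex"
  assumes fin: "(\<integral>\<^sup>+x. ennreal (norm (f x)) \<partial>count_space A) < \<infinity>"
  shows "f summable_on A" and "ennreal (norm (infsum f A)) \<le> (\<integral>\<^sup>+x. ennreal (norm (f x)) \<partial>count_space A)"
proof -
  have "integrable (count_space A) f"
    by (rule integrableI_bounded[OF _ fin]) simp
  then have abs: "Infinite_Set_Sum.abs_summable_on f A"
    by (simp add: Infinite_Set_Sum.abs_summable_on_def)
  then have "Infinite_Sum.abs_summable_on f A" using abs_summable_equivalent by blast
  then show "f summable_on A" using summable_on_iff_abs_summable_on_complex by blast
  have "norm (infsum f A) = norm (infsetsum f A)" by (simp add: infsetsum_infsum[OF abs])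
  also have "\<dots> \<le> infsetsum (\<lambda>x. norm (f x)) A" by (rule norm_infsetsum_bound)
  also have "\<dots> = enn2real (\<integral>\<^sup>+x. ennreal (norm (f x)) \<partial>count_space A)"
    by (rule infsetsum_conv_nn_integral) (use fin in auto)
  finally have "ennreal (norm (infsum f A)) \<le> ennreal (enn2real (\<integral>\<^sup>+x. ennreal (norm (f x)) \<partial>count_space A))"
    by (rule ennreal_leI)
  then show "ennreal (norm (infsum f A)) \<le> (\<integral>\<^sup>+x. ennreal (norm (f x)) \<partial>count_space A)"
    using fin by (subst (asm) ennreal_enn2real) simp_all
qed

lemma norm_infsum_le_nn_integral:
  fixes f :: "'b \<Rightarrow> complex"
  shows "ennreal (norm (infsum f A)) \<le> (\<integral>\<^sup>+x. ennreal (norm (f x)) \<partial>count_space A)"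
  by (cases "(\<integral>\<^sup>+x. ennreal (norm (f x)) \<partial>count_space A) < \<infinity>")
    (simp_all add: summable_on_and_norm_infsum_le_nn_integral(2) not_less top_unique)

lemma borel_measurable_nn_integral_count_space:
  fixes f :: "'i \<Rightarrow> 'b \<Rightarrow> ennreal"
  assumes I: "countable I" and f: "\<And>i. i \<in> I \<Longrightarrow> f i \<in> borel_measurable N"
  shows "(\<lambda>z. \<integral>\<^sup>+i. f i z \<partial>count_space I) \<in> borel_measurable N"
proof (cases "finite I")
  case True
  then show ?thesis using f by (simp add: nn_integral_count_space_finite)
next
  case False
  note bij = bij_betw_from_nat_into[OF I False]
  have eq: "(\<integral>\<^sup>+i. f i z \<partial>count_space I) = (\<Sum>n. f (from_nat_into I n) z)" for z
    by (simp add: nn_integral_bij_count_space[symmetric, OF bij] nn_integral_count_space_nat)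
  have "from_nat_into I n \<in> I" for n using False by (metis bij bij_betwE UNIV_I)
  then show ?thesis unfolding eq using f by measurable
qed

lemma sum_indicator_ball:
  fixes f :: "'a::metric_space \<Rightarrow> real"
  assumes "finite Y"
  shows "(\<Sum>\<eta>\<in>Y. f \<eta> * indicator (ball \<eta> r) z) = (\<Sum>\<eta>\<in>Y \<inter> ball z r. f \<eta>)"
proof -
  have "(\<Sum>\<eta>\<in>Y. f \<eta> * indicator (ball \<eta> r) z) = (\<Sum>\<eta>\<in>Y. f \<eta> * indicator (ball z r) \<eta>)"
    by (intro sum.cong) (auto simp: indicator_def dist_commute)
  also have "\<dots> = (\<Sum>\<eta>\<in>Y \<inter> ball z r. f \<eta>)"
    by (subst sum.inter_restrict[OF assms]) (rule sum.cong, simp_all add: indicator_def)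
  finally show ?thesis .
qed

lemma sum_ennreal_indicator:
  assumes "\<And>\<eta>. 0 \<le> f \<eta>"
  shows "(\<Sum>\<eta>\<in>Y. ennreal (f \<eta>) * indicator (A \<eta>) z) = ennreal (\<Sum>\<eta>\<in>Y. f \<eta> * indicator (A \<eta>) z)"
proof -
  have "ennreal (f \<eta>) * indicator (A \<eta>) z = ennreal (f \<eta> * indicator (A \<eta>) z)" for \<eta>
    by (simp add: indicator_def)
  then show ?thesis using assms by (simp add: sum_ennreal)
qed

section \<open>Separated sets in doubling spaces\<close>

locale doubling_filling =
  fixes M :: "'a::metric_space measure" and S :: "int \<Rightarrow> 'a set" and C Q :: real
  assumes borel: "sets M = sets borel"
    and balls: "\<forall>\<xi> r. 0 < r \<longrightarrow> 0 < emeasure M (ball \<xi> r) \<and> emeasure M (ball \<xi> r) < \<infinity>"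
    and C: "1 \<le> C" and Q: "0 < Q"
    and doubling: "\<forall>\<xi> r t. 0 < r \<and> 1 \<le> t \<longrightarrow>
        measure M (ball \<xi> (t * r)) \<le> C * t powr Q * measure M (ball \<xi> r)"
    and separated: "\<And>n. separated (2 powr (- real_of_int n - 1)) (S n)"
begin

lemma sets_open: "open A \<Longrightarrow> A \<in> sets M"
  using borel by (simp add: borel_open)

lemma sets_ball [measurable]: "ball x r \<in> sets M"
  by (rule sets_open) simp

lemma emeasure_ball_finite: "emeasure M (ball x r) < \<infinity>"
  using balls by (cases "0 < r") (auto simp: ball_empty)

lemma emeasure_ball_eq_measure: "emeasure M (ball x r) = ennreal (measure M (ball x r))"
  by (rule emeasure_eq_ennreal_measure) (use emeasure_ball_finite[of x r] in auto)

lemma measure_ball_pos: "0 < r \<Longrightarrow> 0 < measure M (ball x r)"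
  using balls emeasure_ball_eq_measure by (metis ennreal_less_zero_iff)

lemma measure_le_ball: "A \<subseteq> ball x r \<Longrightarrow> A \<in> sets M \<Longrightarrow> measure M A \<le> measure M (ball x r)"
  by (rule measure_mono_fmeasurable) (use emeasure_ball_finite in \<open>auto simp: fmeasurable_def\<close>)

lemma measure_ball_le_ball:
  assumes "0 < r" "r \<le> L" "R + dist a b \<le> L"
  shows "measure M (ball a R) \<le> C * (L/r) powr Q * measure M (ball b r)"
proof -
  have "ball a R \<subseteq> ball b L"
    using assms(3) by (auto simp: ball_def) (smt (verit) dist_triangle dist_commute)
  then have "measure M (ball a R) \<le> measure M (ball b L)"
    by (rule measure_le_ball) simp
  also have "ball b L = ball b ((L/r) * r)" using assms by simp
  also have "measure M \<dots> \<le> C * (L/r) powr Q * measure M (ball b r)"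
    using doubling[rule_format, of r "L/r" b] assms by simp
  finally show ?thesis .
qed

lemma disjoint_family_on_separated_balls:
  assumes "separated \<delta> A"
  shows "disjoint_family_on (\<lambda>\<xi>. ball \<xi> (\<delta>/2)) A"
  unfolding disjoint_family_on_def
proof (intro ballI impI)
  fix \<xi> \<eta> assume "\<xi> \<in> A" "\<eta> \<in> A" "\<xi> \<noteq> \<eta>"
  then have "\<delta> \<le> dist \<xi> \<eta>" using assms unfolding separated_def by auto
  then show "ball \<xi> (\<delta>/2) \<inter> ball \<eta> (\<delta>/2) = {}"
    by (auto simp: ball_def) (smt (verit) dist_commute dist_triangle)
qed

text \<open>Volume counting: disjoint balls of radius \<open>\<delta>/2\<close> around the points, each comparable to the
  enlarged ball \<open>B(z, R + \<delta>/2)\<close> that contains them all.\<close>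

lemma separated_ball_card_le:
  fixes A :: "'a set"
  assumes \<delta>: "0 < \<delta>" and A: "separated \<delta> A" and R: "0 < R"
  shows "finite (A \<inter> ball z R) \<and> real (card (A \<inter> ball z R)) \<le> C * ((4*R + \<delta>)/\<delta>) powr Q"
proof -
  define N where "N = C * ((4*R + \<delta>)/\<delta>) powr Q"
  have N: "0 < N" using C \<delta> R by (simp add: N_def)
  define R' where "R' = R + \<delta>/2"
  have mz: "0 < measure M (ball z R')" using R \<delta> by (intro measure_ball_pos) (simp add: R'_def)
  have each: "measure M (ball z R') \<le> N * measure M (ball \<xi> (\<delta>/2))" if "\<xi> \<in> ball z R" for \<xi>
  proof -
    have "measure M (ball z R') \<le> C * ((2*R + \<delta>/2)/(\<delta>/2)) powr Q * measure M (ball \<xi> (\<delta>/2))"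
      using that R \<delta> by (intro measure_ball_le_ball) (auto simp: R'_def field_simps)
    also have "(2*R + \<delta>/2)/(\<delta>/2) = (4*R + \<delta>)/\<delta>" using \<delta> by (simp add: field_simps)
    finally show ?thesis by (simp add: N_def)
  qed
  have bound: "real (card F) \<le> N" if F: "finite F" "F \<subseteq> A \<inter> ball z R" for F
  proof -
    have disj: "disjoint_family_on (\<lambda>\<xi>. ball \<xi> (\<delta>/2)) F"
      using disjoint_family_on_mono[OF _ disjoint_family_on_separated_balls[OF A]] F by blast
    have sub: "(\<Union>\<xi>\<in>F. ball \<xi> (\<delta>/2)) \<subseteq> ball z R'"
    proof
      fix w assume "w \<in> (\<Union>\<xi>\<in>F. ball \<xi> (\<delta>/2))"
      then obtain \<xi> where "\<xi> \<in> F" "dist \<xi> w < \<delta>/2" by auto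
      moreover have "dist z \<xi> < R" using F \<open>\<xi> \<in> F\<close> by auto
      ultimately show "w \<in> ball z R'" using dist_triangle[of z w \<xi>] by (simp add: R'_def)
    qed
    have "real (card F) * measure M (ball z R') \<le> (\<Sum>\<xi>\<in>F. N * measure M (ball \<xi> (\<delta>/2)))"
      using F sum_mono[of F "\<lambda>_. measure M (ball z R')"] each by (auto simp: subset_iff)
    also have "\<dots> = N * measure M (\<Union>\<xi>\<in>F. ball \<xi> (\<delta>/2))"
      using F disj emeasure_ball_finite
      by (subst measure_finite_Union) (auto simp: sum_distrib_left less_top)
    also have "\<dots> \<le> N * measure M (ball z R')"
      using N sub by (intro mult_left_mono measure_le_ball) (auto intro: sets_open)
    finally show ?thesis using mz by simp
  qed
  have fin: "finite (A \<inter> ball z R)"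
  proof (rule ccontr)
    assume "infinite (A \<inter> ball z R)"
    then obtain F where "F \<subseteq> A \<inter> ball z R" "finite F" "card F = nat (ceiling N) + 1"
      using infinite_arbitrarily_large by blast
    with bound[of F] show False by linarith
  qed
  show ?thesis using fin bound[OF fin] by (simp add: N_def)
qed

end

definition rad :: "int \<Rightarrow> real" where "rad k = 2 powr (- real_of_int k)"

lemma rad_pos [simp]: "0 < rad k"
  by (simp add: rad_def)

lemma rad_le_pow2: "k - int m \<le> j \<Longrightarrow> rad j \<le> 2^m * rad k"
proof -
  assume "k - int m \<le> j"
  then have "rad j \<le> 2 powr (real m - real_of_int k)" unfolding rad_def by (intro powr_mono) auto
  also have "\<dots> = 2^m * rad k" by (simp add: rad_def powr_diff powr_realpow powr_minus_divide)
  finally show ?thesis .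
qed

lemma rad_divide: "rad k / rad j = 2 powr (real_of_int (j - k))"
  by (simp add: rad_def powr_diff[symmetric] powr_minus_divide)

lemma vball_eq: "vball (k, \<xi>) = ball \<xi> (rad k)"
  by (simp add: vball_def rad_def)

definition incident :: "(int \<Rightarrow> 'a::metric_space set) \<Rightarrow> int \<Rightarrow> 'a \<Rightarrow> int \<Rightarrow> 'a set" where
  "incident S k \<xi> j = {\<eta> \<in> S j. ball \<eta> (rad j) \<inter> ball \<xi> (rad k) \<noteq> {}}"

lemma dist_incident: "\<eta> \<in> incident S k \<xi> j \<Longrightarrow> dist \<xi> \<eta> < rad k + rad j"
  unfolding incident_def by (auto simp: ball_def) (smt (verit) dist_commute dist_triangle)

context doubling_filling
begin

definition overlap_bound :: "real \<Rightarrow> real" where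
  "overlap_bound L = C * (8 * L + 1) powr Q"

lemma overlap_bound_pos: "0 \<le> L \<Longrightarrow> 0 < overlap_bound L"
  using C by (simp add: overlap_bound_def)

lemma finite_card_S_ball:
  assumes L: "0 < L"
  shows "finite (S k \<inter> ball z (L * rad k)) \<and> real (card (S k \<inter> ball z (L * rad k))) \<le> overlap_bound L"
proof -
  have "separated (rad k / 2) (S k)" using separated[of k] by (simp add: rad_def powr_diff)
  then have "finite (S k \<inter> ball z (L * rad k)) \<and> real (card (S k \<inter> ball z (L * rad k)))
      \<le> C * ((4 * (L * rad k) + rad k / 2) / (rad k / 2)) powr Q"
    by (rule separated_ball_card_le[rotated]) (use L in auto)
  also have "(4 * (L * rad k) + rad k / 2) / (rad k / 2) = 8 * L + 1"
    using rad_pos[of k] by (simp add: field_simps del: rad_pos)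
  finally show ?thesis by (simp add: overlap_bound_def)
qed

lemma finite_S_ball: "finite (S k \<inter> ball z (rad k))"
  using finite_card_S_ball[of 1 k z] by simp

lemma card_S_ball_le: "real (card (S k \<inter> ball z (rad k))) \<le> overlap_bound 1"
  using finite_card_S_ball[of 1 k z] by simp

lemma countable_S: "countable (S k)"
proof -
  fix z :: 'a
  have "S k \<subseteq> (\<Union>n::nat. S k \<inter> ball z ((real n + 1) * rad k))"
  proof
    fix \<xi> assume "\<xi> \<in> S k"
    obtain n :: nat where "dist z \<xi> / rad k < real n" using reals_Archimedean2 by blast
    then have "dist z \<xi> < (real n + 1) * rad k"
      using rad_pos[of k] by (simp add: pos_divide_less_eq algebra_simps del: rad_pos)
    then show "\<xi> \<in> (\<Union>n::nat. S k \<inter> ball z ((real n + 1) * rad k))" using \<open>\<xi> \<in> S k\<close> by auto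
  qed
  moreover have "finite (S k \<inter> ball z ((real n + 1) * rad k))" for n
    using finite_card_S_ball[of "real n + 1" k z] by simp
  ultimately show ?thesis by (meson countable_UN countable_finite countable_subset UNIV_I countableI_type)
qed

lemma finite_incident: "finite (incident S k \<xi> j)"
proof (rule finite_subset)
  show "incident S k \<xi> j \<subseteq> S j \<inter> ball \<xi> (((rad k + rad j) / rad j) * rad j)"
  proof
    fix \<eta> assume h: "\<eta> \<in> incident S k \<xi> j"
    then show "\<eta> \<in> S j \<inter> ball \<xi> (((rad k + rad j) / rad j) * rad j)"
      using dist_incident[OF h] rad_pos[of j] by (auto simp: incident_def simp del: rad_pos)
  qed
  show "finite (S j \<inter> ball \<xi> (((rad k + rad j) / rad j) * rad j))"
    using finite_card_S_ball[of "(rad k + rad j) / rad j" j \<xi>] by (simp add: add_pos_pos)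
qed

lemma finite_card_incident_inverse:
  assumes "k - int m \<le> j"
  shows "finite {\<xi> \<in> S k. \<eta> \<in> incident S k \<xi> j}
    \<and> real (card {\<xi> \<in> S k. \<eta> \<in> incident S k \<xi> j}) \<le> overlap_bound (1 + 2^m)"
proof -
  have sub: "{\<xi> \<in> S k. \<eta> \<in> incident S k \<xi> j} \<subseteq> S k \<inter> ball \<eta> ((1 + 2^m) * rad k)"
    using dist_incident rad_le_pow2[OF assms] by (fastforce simp: dist_commute algebra_simps)
  have "finite (S k \<inter> ball \<eta> ((1 + 2^m) * rad k))
      \<and> real (card (S k \<inter> ball \<eta> ((1 + 2^m) * rad k))) \<le> overlap_bound (1 + 2^m)"
    by (rule finite_card_S_ball) (simp add: add_pos_pos)
  then show ?thesis using card_mono[OF _ sub] finite_subset[OF sub]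
    by (meson dual_order.trans of_nat_le_iff)
qed

abbreviation mu :: "int \<Rightarrow> 'a \<Rightarrow> real" where
  "mu k \<xi> \<equiv> measure M (ball \<xi> (rad k))"

lemma mu_pos: "0 < mu k \<xi>"
  by (rule measure_ball_pos) simp

lemma ball_incident_subset:
  assumes "k - int m \<le> j" "\<eta> \<in> incident S k \<xi> j"
  shows "ball \<eta> (rad j) \<subseteq> ball \<xi> ((1 + 2^(m+1)) * rad k)"
proof
  fix w assume "w \<in> ball \<eta> (rad j)"
  moreover have "dist \<xi> \<eta> < rad k + rad j" by (rule dist_incident[OF assms(2)])
  moreover have "rad j \<le> 2^m * rad k" by (rule rad_le_pow2[OF assms(1)])
  ultimately show "w \<in> ball \<xi> ((1 + 2^(m+1)) * rad k)"
    using dist_triangle[of \<xi> w \<eta>] by (simp add: algebra_simps)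
qed

lemma mu_le_incident:
  assumes "k - int m \<le> j" "\<eta> \<in> incident S k \<xi> j"
  shows "mu k \<xi> \<le> C * (3 * 2^m) powr Q * 2 powr (real_of_int (j - k) * Q) * mu j \<eta>"
proof -
  have "mu k \<xi> \<le> C * ((2 * rad k + rad j) / rad j) powr Q * mu j \<eta>"
    using dist_incident[OF assms(2)] rad_pos[of k] rad_pos[of j]
    by (intro measure_ball_le_ball) (auto simp: dist_commute simp del: rad_pos)
  also have "(2 * rad k + rad j) / rad j = 2 * 2 powr (real_of_int (j - k)) + 1"
    using rad_pos[of j] rad_divide[of k j] by (simp add: field_simps del: rad_pos)
  also have "(2 * 2 powr (real_of_int (j - k)) + 1) powr Q \<le> (3 * 2^m * 2 powr (real_of_int (j - k))) powr Q"
  proof -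
    have "1 \<le> 2 powr (real m + real_of_int (j - k))" using assms(1) by (intro ge_one_powr_ge_zero) auto
    then have "1 \<le> 2^m * 2 powr (real_of_int (j - k))" by (simp add: powr_add powr_realpow)
    moreover have "2 * 2 powr (real_of_int (j - k)) \<le> 2 * (2^m * 2 powr (real_of_int (j - k)))"
      by (simp add: mult_le_cancel_right1)
    ultimately have "2 * 2 powr (real_of_int (j - k)) + 1 \<le> 3 * (2^m * 2 powr (real_of_int (j - k)))"
      by linarith
    then show ?thesis using Q by (intro powr_mono2) (auto simp: mult.assoc)
  qed
  also have "(3 * 2^m * 2 powr (real_of_int (j - k))) powr Q
      = (3 * 2^m) powr Q * 2 powr (real_of_int (j - k) * Q)"
    by (simp add: powr_mult powr_powr)
  finally show ?thesis using C mu_pos[of \<eta> j] by (simp add: mult_left_mono mult_right_mono mult.assoc)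
qed

section \<open>Level estimates\<close>

definition level_sum :: "(int \<times> 'a \<Rightarrow> complex) \<Rightarrow> int \<Rightarrow> 'a \<Rightarrow> real" where
  "level_sum u j z = (\<Sum>\<eta>\<in>S j \<inter> ball z (rad j). cmod (u (j, \<eta>)))"

text \<open>\<open>Tpart u k \<xi> j\<close> bounds the contribution of level \<open>j\<close> to \<open>|Tu(k, \<xi>)|\<close>, and
  \<open>Tpart_level u k j\<close> is the level-\<open>k\<close> function of \<open>\<xi> \<mapsto> Tpart u k \<xi> j\<close>.\<close>

definition Tpart :: "(int \<times> 'a \<Rightarrow> complex) \<Rightarrow> int \<Rightarrow> 'a \<Rightarrow> int \<Rightarrow> real" where
  "Tpart u k \<xi> j = (\<Sum>\<eta>\<in>incident S k \<xi> j. (mu j \<eta> / mu k \<xi>) * cmod (u (j, \<eta>)))"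

definition Tpart_level :: "(int \<times> 'a \<Rightarrow> complex) \<Rightarrow> int \<Rightarrow> int \<Rightarrow> 'a \<Rightarrow> real" where
  "Tpart_level u k j z = (\<Sum>\<xi>\<in>S k \<inter> ball z (rad k). Tpart u k \<xi> j)"

lemma level_sum_nonneg: "0 \<le> level_sum u j z"
  by (simp add: level_sum_def sum_nonneg)

lemma Tpart_nonneg: "0 \<le> Tpart u k \<xi> j"
  unfolding Tpart_def using mu_pos by (intro sum_nonneg) (auto intro!: mult_nonneg_nonneg divide_nonneg_pos)

lemma Tpart_level_nonneg: "0 \<le> Tpart_level u k j z"
  by (simp add: Tpart_level_def sum_nonneg Tpart_nonneg)

lemma ennreal_Tpart:
  "ennreal (Tpart u k \<xi> j) = (\<Sum>\<eta>\<in>incident S k \<xi> j. ennreal ((mu j \<eta> / mu k \<xi>) * cmod (u (j, \<eta>))))"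
  unfolding Tpart_def using mu_pos by (subst sum_ennreal) (auto intro!: mult_nonneg_nonneg divide_nonneg_pos)

lemma nn_integral_S_ball_indicator:
  fixes f :: "'a \<Rightarrow> real"
  assumes "\<And>\<xi>. 0 \<le> f \<xi>"
  shows "(\<integral>\<^sup>+\<xi>. ennreal (f \<xi>) * indicator (ball \<xi> (rad k)) z \<partial>count_space (S k))
     = ennreal (\<Sum>\<xi>\<in>S k \<inter> ball z (rad k). f \<xi>)"
proof -
  have "(\<integral>\<^sup>+\<xi>. ennreal (f \<xi>) * indicator (ball \<xi> (rad k)) z \<partial>count_space (S k))
      = (\<Sum>\<xi>\<in>S k \<inter> ball z (rad k). ennreal (f \<xi>) * indicator (ball \<xi> (rad k)) z)"
    by (rule nn_integral_count_space'[OF finite_S_ball]) (auto simp: indicator_def dist_commute)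
  also have "\<dots> = (\<Sum>\<xi>\<in>S k \<inter> ball z (rad k). ennreal (f \<xi>))"
    by (intro sum.cong) (auto simp: indicator_def dist_commute)
  finally show ?thesis using assms by simp
qed

lemma borel_measurable_S_ball_indicator:
  "(\<lambda>z. \<integral>\<^sup>+\<xi>. ennreal (f \<xi>) * indicator (ball \<xi> (rad k)) z \<partial>count_space (S k)) \<in> borel_measurable M"
  by (rule borel_measurable_nn_integral_count_space[OF countable_S]) simp

lemma level_fun_eq_level_sum: "level_fun S u j z = ennreal (level_sum u j z)"
  unfolding level_fun_def level_sum_def vball_eq by (rule nn_integral_S_ball_indicator) simp

lemma borel_measurable_level_fun [measurable]: "level_fun S u j \<in> borel_measurable M"
  unfolding level_fun_def vball_eq by (rule borel_measurable_S_ball_indicator)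

lemma borel_measurable_level_sum [measurable]: "level_sum u j \<in> borel_measurable M"
proof -
  have "level_sum u j = (\<lambda>z. enn2real (level_fun S u j z))"
    by (auto simp: level_fun_eq_level_sum level_sum_nonneg)
  then show ?thesis by simp
qed

lemma ennreal_Tpart_level:
  "ennreal (Tpart_level u k j z)
    = (\<integral>\<^sup>+\<xi>. ennreal (Tpart u k \<xi> j) * indicator (ball \<xi> (rad k)) z \<partial>count_space (S k))"
  unfolding Tpart_level_def by (rule nn_integral_S_ball_indicator[symmetric]) (rule Tpart_nonneg)

lemma borel_measurable_Tpart_level [measurable]: "Tpart_level u k j \<in> borel_measurable M"
proof -
  have "Tpart_level u k j = (\<lambda>z. enn2real (\<integral>\<^sup>+\<xi>. ennreal (Tpart u k \<xi> j) * indicator (ball \<xi> (rad k)) z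
      \<partial>count_space (S k)))"
    by (auto simp: ennreal_Tpart_level[symmetric] Tpart_level_nonneg)
  then show ?thesis using borel_measurable_S_ball_indicator by simp
qed

lemma nn_integral_indicator_ball:
  "0 \<le> c \<Longrightarrow> (\<integral>\<^sup>+z. ennreal c * indicator (ball \<xi> r) z \<partial>M) = ennreal (measure M (ball \<xi> r) * c)"
  by (simp add: nn_integral_cmult_indicator emeasure_ball_eq_measure ennreal_mult[symmetric] mult.commute)

lemma nn_integral_mu_powr_le_level_sum:
  assumes "0 < P"
  shows "(\<integral>\<^sup>+\<eta>. ennreal (mu j \<eta> * cmod (u (j, \<eta>)) powr P) \<partial>count_space (S j))
    \<le> ennreal (overlap_bound 1) * (\<integral>\<^sup>+z. ennreal (level_sum u j z powr P) \<partial>M)"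
proof -
  have "(\<integral>\<^sup>+\<eta>. ennreal (mu j \<eta> * cmod (u (j, \<eta>)) powr P) \<partial>count_space (S j))
      = (\<integral>\<^sup>+\<eta>. \<integral>\<^sup>+z. ennreal (cmod (u (j, \<eta>)) powr P) * indicator (ball \<eta> (rad j)) z \<partial>M \<partial>count_space (S j))"
    by (intro nn_integral_cong) (simp add: nn_integral_indicator_ball)
  also have "\<dots> = (\<integral>\<^sup>+z. \<integral>\<^sup>+\<eta>. ennreal (cmod (u (j, \<eta>)) powr P) * indicator (ball \<eta> (rad j)) z
      \<partial>count_space (S j) \<partial>M)"
    by (rule nn_integral_count_space_nn_integral[symmetric, OF countable_S]) simp
  also have "\<dots> = (\<integral>\<^sup>+z. ennreal (\<Sum>\<eta>\<in>S j \<inter> ball z (rad j). cmod (u (j, \<eta>)) powr P) \<partial>M)"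
    by (intro nn_integral_cong nn_integral_S_ball_indicator) simp
  also have "\<dots> \<le> (\<integral>\<^sup>+z. ennreal (overlap_bound 1) * ennreal (level_sum u j z powr P) \<partial>M)"
  proof (intro nn_integral_mono)
    fix z
    have "(\<Sum>\<eta>\<in>S j \<inter> ball z (rad j). cmod (u (j, \<eta>)) powr P) \<le> (\<Sum>\<eta>\<in>S j \<inter> ball z (rad j). level_sum u j z powr P)"
      unfolding level_sum_def using assms
      by (intro sum_mono powr_mono2 member_le_sum finite_S_ball) auto
    also have "\<dots> \<le> overlap_bound 1 * level_sum u j z powr P"
      using card_S_ball_le[of j z] by (simp add: mult_right_mono)
    finally show "ennreal (\<Sum>\<eta>\<in>S j \<inter> ball z (rad j). cmod (u (j, \<eta>)) powr P)
        \<le> ennreal (overlap_bound 1) * ennreal (level_sum u j z powr P)"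
      using overlap_bound_pos[of 1] by (simp add: ennreal_mult[symmetric] ennreal_leI)
  qed
  finally show ?thesis by (simp add: nn_integral_cmult)
qed

lemma Tpart_level_powr_le:
  assumes "0 < P"
  shows "(\<integral>\<^sup>+z. ennreal (Tpart_level u k j z powr P) \<partial>M)
    \<le> ennreal (overlap_bound 1 powr P) * (\<integral>\<^sup>+\<xi>. ennreal (mu k \<xi> * Tpart u k \<xi> j powr P) \<partial>count_space (S k))"
proof -
  have "(\<integral>\<^sup>+z. ennreal (Tpart_level u k j z powr P) \<partial>M) \<le> (\<integral>\<^sup>+z. ennreal (overlap_bound 1 powr P) *
      (\<integral>\<^sup>+\<xi>. ennreal (Tpart u k \<xi> j powr P) * indicator (ball \<xi> (rad k)) z \<partial>count_space (S k)) \<partial>M)"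
  proof (intro nn_integral_mono)
    fix z
    have "Tpart_level u k j z powr P
        \<le> real (card (S k \<inter> ball z (rad k))) powr P * (\<Sum>\<xi>\<in>S k \<inter> ball z (rad k). Tpart u k \<xi> j powr P)"
      unfolding Tpart_level_def using assms
      by (intro powr_sum_le_card_powr_sum_powr finite_S_ball) (auto simp: Tpart_nonneg)
    also have "\<dots> \<le> overlap_bound 1 powr P * (\<Sum>\<xi>\<in>S k \<inter> ball z (rad k). Tpart u k \<xi> j powr P)"
      using card_S_ball_le[of k z] assms by (intro mult_right_mono powr_mono2 sum_nonneg) auto
    finally show "ennreal (Tpart_level u k j z powr P) \<le> ennreal (overlap_bound 1 powr P) *
        (\<integral>\<^sup>+\<xi>. ennreal (Tpart u k \<xi> j powr P) * indicator (ball \<xi> (rad k)) z \<partial>count_space (S k))"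
      by (simp add: nn_integral_S_ball_indicator ennreal_mult[symmetric] ennreal_leI sum_nonneg)
  qed
  also have "\<dots> = ennreal (overlap_bound 1 powr P) * (\<integral>\<^sup>+\<xi>. \<integral>\<^sup>+z.
      ennreal (Tpart u k \<xi> j powr P) * indicator (ball \<xi> (rad k)) z \<partial>M \<partial>count_space (S k))"
    by (simp add: nn_integral_cmult borel_measurable_S_ball_indicator
        nn_integral_count_space_nn_integral[OF countable_S])
  also have "\<dots> = ennreal (overlap_bound 1 powr P) *
      (\<integral>\<^sup>+\<xi>. ennreal (mu k \<xi> * Tpart u k \<xi> j powr P) \<partial>count_space (S k))"
    by (simp add: nn_integral_indicator_ball)
  finally show ?thesis .
qed

definition dilation :: "nat \<Rightarrow> real" where
  "dilation m = 1 + 2^(m+1)"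

definition vol_const :: "nat \<Rightarrow> real" where
  "vol_const m = overlap_bound 1 * (C * dilation m powr Q)"

lemma dilation_ge_1: "1 \<le> dilation m"
  by (simp add: dilation_def)

lemma vol_const_pos: "0 < vol_const m"
  using overlap_bound_pos[of 1] C dilation_ge_1[of m] by (simp add: vol_const_def)

lemma incident_inter_ball_empty:
  assumes "k - int m \<le> j" "z \<notin> ball \<xi> (dilation m * rad k)"
  shows "incident S k \<xi> j \<inter> ball z (rad j) = {}"
  using ball_incident_subset[OF assms(1)] assms(2) by (fastforce simp: dilation_def dist_commute)

lemma sum_indicator_incident_le:
  assumes "k - int m \<le> j"
  shows "(\<Sum>\<eta>\<in>incident S k \<xi> j. indicator (ball \<eta> (rad j)) z)
    \<le> overlap_bound 1 * (indicator (ball \<xi> (dilation m * rad k)) z :: real)"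
proof -
  have eq: "(\<Sum>\<eta>\<in>incident S k \<xi> j. indicator (ball \<eta> (rad j)) z)
      = real (card (incident S k \<xi> j \<inter> ball z (rad j)))"
    using sum_indicator_ball[OF finite_incident, of "\<lambda>_. 1"] by simp
  show ?thesis
  proof (cases "z \<in> ball \<xi> (dilation m * rad k)")
    case True
    have "card (incident S k \<xi> j \<inter> ball z (rad j)) \<le> card (S j \<inter> ball z (rad j))"
      by (intro card_mono finite_S_ball) (auto simp: incident_def)
    then show ?thesis using True eq card_S_ball_le[of j z] by simp
  qed (simp add: eq incident_inter_ball_empty[OF assms])
qed

lemma sum_mu_incident_le:
  assumes "k - int m \<le> j"
  shows "(\<Sum>\<eta>\<in>incident S k \<xi> j. mu j \<eta>) \<le> vol_const m * mu k \<xi>"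
proof -
  have "ennreal (\<Sum>\<eta>\<in>incident S k \<xi> j. mu j \<eta>) = (\<Sum>\<eta>\<in>incident S k \<xi> j. emeasure M (ball \<eta> (rad j)))"
    by (simp add: emeasure_ball_eq_measure)
  also have "\<dots> = (\<integral>\<^sup>+z. (\<Sum>\<eta>\<in>incident S k \<xi> j. indicator (ball \<eta> (rad j)) z) \<partial>M)"
    by (subst nn_integral_sum) auto
  also have "\<dots> = (\<integral>\<^sup>+z. ennreal (\<Sum>\<eta>\<in>incident S k \<xi> j. indicator (ball \<eta> (rad j)) z) \<partial>M)"
    by (intro nn_integral_cong) (simp add: sum_ennreal_indicator[where f="\<lambda>_. 1", simplified])
  also have "\<dots> \<le> (\<integral>\<^sup>+z. ennreal (overlap_bound 1) * indicator (ball \<xi> (dilation m * rad k)) z \<partial>M)"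
  proof (intro nn_integral_mono)
    fix z
    show "ennreal (\<Sum>\<eta>\<in>incident S k \<xi> j. indicator (ball \<eta> (rad j)) z)
        \<le> ennreal (overlap_bound 1) * indicator (ball \<xi> (dilation m * rad k)) z"
      using ennreal_leI[OF sum_indicator_incident_le[OF assms, where \<xi>=\<xi> and z=z]]
      by (cases "z \<in> ball \<xi> (dilation m * rad k)") (simp_all del: of_bool_eq)
  qed
  also have "\<dots> = ennreal (overlap_bound 1 * measure M (ball \<xi> (dilation m * rad k)))"
    using overlap_bound_pos[of 1] by (simp add: nn_integral_indicator_ball mult.commute)
  also have "\<dots> \<le> ennreal (vol_const m * mu k \<xi>)"
    using doubling dilation_ge_1[of m] overlap_bound_pos[of 1]
    by (intro ennreal_leI) (auto simp: vol_const_def mult.assoc intro: mult_left_mono)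
  finally show ?thesis using vol_const_pos[of m] mu_pos[of \<xi> k] by (subst (asm) ennreal_le_iff) auto
qed

lemma sum_mu_powr_incident_le:
  assumes "k - int m \<le> j" "1 \<le> P"
  shows "ennreal (\<Sum>\<eta>\<in>incident S k \<xi> j. mu j \<eta> * cmod (u (j, \<eta>)) powr P)
    \<le> (\<integral>\<^sup>+z. indicator (ball \<xi> (dilation m * rad k)) z * ennreal (level_sum u j z powr P) \<partial>M)"
proof -
  let ?Y = "incident S k \<xi> j"
  have "ennreal (\<Sum>\<eta>\<in>?Y. mu j \<eta> * cmod (u (j, \<eta>)) powr P)
      = (\<Sum>\<eta>\<in>?Y. ennreal (cmod (u (j, \<eta>)) powr P) * emeasure M (ball \<eta> (rad j)))"
    by (simp add: emeasure_ball_eq_measure ennreal_mult[symmetric] mult.commute)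
  also have "\<dots> = (\<integral>\<^sup>+z. (\<Sum>\<eta>\<in>?Y. ennreal (cmod (u (j, \<eta>)) powr P) * indicator (ball \<eta> (rad j)) z) \<partial>M)"
    by (subst nn_integral_sum) (auto simp: nn_integral_cmult_indicator)
  also have "\<dots> = (\<integral>\<^sup>+z. ennreal (\<Sum>\<eta>\<in>?Y. cmod (u (j, \<eta>)) powr P * indicator (ball \<eta> (rad j)) z) \<partial>M)"
    by (simp add: sum_ennreal_indicator)
  also have "\<dots> \<le> (\<integral>\<^sup>+z. indicator (ball \<xi> (dilation m * rad k)) z * ennreal (level_sum u j z powr P) \<partial>M)"
  proof (intro nn_integral_mono)
    fix z
    have eq: "(\<Sum>\<eta>\<in>?Y. cmod (u (j, \<eta>)) powr P * indicator (ball \<eta> (rad j)) z)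
        = (\<Sum>\<eta>\<in>?Y \<inter> ball z (rad j). cmod (u (j, \<eta>)) powr P)"
      by (rule sum_indicator_ball[OF finite_incident])
    show "ennreal (\<Sum>\<eta>\<in>?Y. cmod (u (j, \<eta>)) powr P * indicator (ball \<eta> (rad j)) z)
        \<le> indicator (ball \<xi> (dilation m * rad k)) z * ennreal (level_sum u j z powr P)"
    proof (cases "z \<in> ball \<xi> (dilation m * rad k)")
      case True
      have "(\<Sum>\<eta>\<in>?Y \<inter> ball z (rad j). cmod (u (j, \<eta>)) powr P)
          \<le> (\<Sum>\<eta>\<in>?Y \<inter> ball z (rad j). cmod (u (j, \<eta>))) powr P"
        using finite_incident assms by (intro sum_powr_le_powr_sum) auto
      also have "\<dots> \<le> level_sum u j z powr P"
        unfolding level_sum_def using assms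
        by (intro powr_mono2 sum_mono2 finite_S_ball sum_nonneg) (auto simp: incident_def)
      finally show ?thesis using True eq by (simp add: ennreal_leI)
    qed (simp add: eq incident_inter_ball_empty[OF assms(1)])
  qed
  finally show ?thesis .
qed

text \<open>For \<open>P \<ge> 1\<close>, Jensen's inequality with the weights \<open>\<mu>(B(j, \<eta>))\<close>.\<close>

lemma mu_Tpart_powr_le_ge1:
  assumes "k - int m \<le> j" "1 \<le> P"
  shows "ennreal (mu k \<xi> * Tpart u k \<xi> j powr P) \<le> ennreal (vol_const m powr (P - 1)) *
    (\<integral>\<^sup>+z. indicator (ball \<xi> (dilation m * rad k)) z * ennreal (level_sum u j z powr P) \<partial>M)"
proof -
  let ?Y = "incident S k \<xi> j"
  define W where "W = (\<Sum>\<eta>\<in>?Y. mu j \<eta>)"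
  define V where "V = (\<Sum>\<eta>\<in>?Y. mu j \<eta> * cmod (u (j, \<eta>)) powr P)"
  define U where "U = (\<Sum>\<eta>\<in>?Y. mu j \<eta> * cmod (u (j, \<eta>)))"
  have mk: "0 < mu k \<xi>" by (rule mu_pos)
  have U0: "0 \<le> U" and V0: "0 \<le> V" by (simp_all add: U_def V_def sum_nonneg)
  have jensen: "U powr P \<le> W powr (P - 1) * V"
    unfolding U_def W_def V_def using assms(2) by (intro powr_weighted_sum_le finite_incident) auto
  have W: "W powr (P - 1) \<le> (vol_const m * mu k \<xi>) powr (P - 1)"
    using sum_mu_incident_le[OF assms(1)] assms(2) by (intro powr_mono2) (auto simp: W_def sum_nonneg)
  have "Tpart u k \<xi> j = U / mu k \<xi>"
    by (simp add: Tpart_def U_def sum_divide_distrib)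
  then have "mu k \<xi> * Tpart u k \<xi> j powr P = mu k \<xi> * U powr P / mu k \<xi> powr P"
    using mk U0 by (simp add: powr_divide)
  also have "\<dots> \<le> mu k \<xi> * ((vol_const m * mu k \<xi>) powr (P - 1) * V) / mu k \<xi> powr P"
    using jensen W mk V0 by (intro divide_right_mono mult_left_mono order_trans[OF jensen] mult_right_mono) auto
  also have "\<dots> = vol_const m powr (P - 1) * V"
    using mk vol_const_pos[of m] by (simp add: powr_mult powr_diff field_simps)
  finally have "ennreal (mu k \<xi> * Tpart u k \<xi> j powr P) \<le> ennreal (vol_const m powr (P - 1)) * ennreal V"
    using V0 by (simp add: ennreal_mult[symmetric] ennreal_leI)
  also have "\<dots> \<le> ennreal (vol_const m powr (P - 1)) *
      (\<integral>\<^sup>+z. indicator (ball \<xi> (dilation m * rad k)) z * ennreal (level_sum u j z powr P) \<partial>M)"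
    unfolding V_def by (intro mult_left_mono sum_mu_powr_incident_le assms) auto
  finally show ?thesis .
qed

lemma nn_integral_mu_Tpart_powr_le_ge1:
  assumes "k - int m \<le> j" "1 \<le> P"
  shows "(\<integral>\<^sup>+\<xi>. ennreal (mu k \<xi> * Tpart u k \<xi> j powr P) \<partial>count_space (S k))
    \<le> ennreal (vol_const m powr (P - 1) * overlap_bound (dilation m)) *
      (\<integral>\<^sup>+z. ennreal (level_sum u j z powr P) \<partial>M)"
proof -
  let ?B = "\<lambda>\<xi>. ball \<xi> (dilation m * rad k)"
  have "(\<integral>\<^sup>+\<xi>. ennreal (mu k \<xi> * Tpart u k \<xi> j powr P) \<partial>count_space (S k))
      \<le> ennreal (vol_const m powr (P - 1)) * (\<integral>\<^sup>+\<xi>. \<integral>\<^sup>+z. indicator (?B \<xi>) z *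
        ennreal (level_sum u j z powr P) \<partial>M \<partial>count_space (S k))"
    using mu_Tpart_powr_le_ge1[OF assms] by (subst nn_integral_cmult[symmetric]) (auto intro: nn_integral_mono)
  also have "(\<integral>\<^sup>+\<xi>. \<integral>\<^sup>+z. indicator (?B \<xi>) z * ennreal (level_sum u j z powr P) \<partial>M \<partial>count_space (S k))
      = (\<integral>\<^sup>+z. (\<integral>\<^sup>+\<xi>. indicator (?B \<xi>) z \<partial>count_space (S k)) * ennreal (level_sum u j z powr P) \<partial>M)"
    by (subst nn_integral_count_space_nn_integral[symmetric, OF countable_S])
      (simp_all add: nn_integral_multc)
  also have "\<dots> \<le> (\<integral>\<^sup>+z. ennreal (overlap_bound (dilation m)) * ennreal (level_sum u j z powr P) \<partial>M)"
  proof (intro nn_integral_mono mult_right_mono)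
    fix z
    have fin: "finite (S k \<inter> ball z (dilation m * rad k))"
      and card: "real (card (S k \<inter> ball z (dilation m * rad k))) \<le> overlap_bound (dilation m)"
      using finite_card_S_ball[of "dilation m" k z] dilation_ge_1[of m] by auto
    have "(\<integral>\<^sup>+\<xi>. indicator (?B \<xi>) z \<partial>count_space (S k))
        = (\<Sum>\<xi>\<in>S k \<inter> ball z (dilation m * rad k). indicator (?B \<xi>) z)"
      by (rule nn_integral_count_space'[OF fin]) (auto simp: indicator_def dist_commute)
    also have "\<dots> = ennreal (real (card (S k \<inter> ball z (dilation m * rad k))))"
      by (simp add: indicator_def dist_commute ennreal_of_nat_eq_real_of_nat)
    finally show "(\<integral>\<^sup>+\<xi>. indicator (?B \<xi>) z \<partial>count_space (S k)) \<le> ennreal (overlap_bound (dilation m))"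
      using card by (simp add: ennreal_leI)
  qed simp
  finally show ?thesis
    using overlap_bound_pos[of "dilation m"] dilation_ge_1[of m] vol_const_pos[of m]
    by (simp add: nn_integral_cmult ennreal_mult mult.assoc mult_left_mono)
qed

definition ratio_const :: "nat \<Rightarrow> real" where
  "ratio_const m = C * (3 * 2^m) powr Q"

lemma ratio_const_pos: "0 < ratio_const m"
  using C by (simp add: ratio_const_def)

text \<open>For \<open>P < 1\<close>, \<open>P\<close>-subadditivity; the resulting factor \<open>(\<mu>(B(x))/\<mu>(B(y)))\<^sup>1\<^sup>-\<^sup>P\<close> is
  where the loss \<open>2\<^sup>(j-k)Q(1-P)\<close> comes from.\<close>

lemma mu_Tpart_powr_le_lt1:
  assumes "k - int m \<le> j" "0 < P" "P < 1"
  shows "mu k \<xi> * Tpart u k \<xi> j powr P \<le> (ratio_const m * 2 powr (real_of_int (j - k) * Q)) powr (1 - P) *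
    (\<Sum>\<eta>\<in>incident S k \<xi> j. mu j \<eta> * cmod (u (j, \<eta>)) powr P)"
proof -
  define G where "G = (ratio_const m * 2 powr (real_of_int (j - k) * Q)) powr (1 - P)"
  have mx: "0 < mu k \<xi>" by (rule mu_pos)
  have termwise: "mu k \<xi> * ((mu j \<eta> / mu k \<xi>) * cmod (u (j, \<eta>))) powr P \<le> G * (mu j \<eta> * cmod (u (j, \<eta>)) powr P)"
    if \<eta>: "\<eta> \<in> incident S k \<xi> j" for \<eta>
  proof -
    have my: "0 < mu j \<eta>" by (rule mu_pos)
    have "mu k \<xi> / mu j \<eta> \<le> ratio_const m * 2 powr (real_of_int (j - k) * Q)"
      using mu_le_incident[OF assms(1) \<eta>] my by (simp add: ratio_const_def divide_le_eq mult.assoc)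
    then have "(mu k \<xi> / mu j \<eta>) powr (1 - P) \<le> G"
      unfolding G_def using mx my assms by (intro powr_mono2) auto
    moreover have "mu k \<xi> * ((mu j \<eta> / mu k \<xi>) * cmod (u (j, \<eta>))) powr P
        = mu j \<eta> * (mu k \<xi> / mu j \<eta>) powr (1 - P) * cmod (u (j, \<eta>)) powr P"
      using mx my assms by (simp add: powr_mult powr_divide powr_diff field_simps)
    moreover have "mu j \<eta> * (mu k \<xi> / mu j \<eta>) powr (1 - P) * cmod (u (j, \<eta>)) powr P
        \<le> mu j \<eta> * G * cmod (u (j, \<eta>)) powr P"
      using calculation(1) my by (intro mult_right_mono mult_left_mono) auto
    ultimately show ?thesis by (simp add: mult_ac)
  qed
  have subadd: "Tpart u k \<xi> j powr P \<le> (\<Sum>\<eta>\<in>incident S k \<xi> j. ((mu j \<eta> / mu k \<xi>) * cmod (u (j, \<eta>))) powr P)"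
    unfolding Tpart_def using assms mu_pos
    by (intro powr_sum_le_sum_powr finite_incident) (auto intro: divide_nonneg_pos)
  have "mu k \<xi> * Tpart u k \<xi> j powr P
      \<le> (\<Sum>\<eta>\<in>incident S k \<xi> j. mu k \<xi> * ((mu j \<eta> / mu k \<xi>) * cmod (u (j, \<eta>))) powr P)"
    using mult_left_mono[OF subadd, of "mu k \<xi>"] mx by (simp add: sum_distrib_left)
  also have "\<dots> \<le> G * (\<Sum>\<eta>\<in>incident S k \<xi> j. mu j \<eta> * cmod (u (j, \<eta>)) powr P)"
    unfolding sum_distrib_left by (intro sum_mono termwise)
  finally show ?thesis by (simp add: G_def)
qed

lemma nn_integral_sum_incident_le:
  assumes "k - int m \<le> j"
  shows "(\<integral>\<^sup>+\<xi>. (\<Sum>\<eta>\<in>incident S k \<xi> j. h \<eta>) \<partial>count_space (S k))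
    \<le> ennreal (overlap_bound (1 + 2^m)) * (\<integral>\<^sup>+\<eta>. h \<eta> \<partial>count_space (S j))"
proof -
  have "(\<integral>\<^sup>+\<xi>. (\<Sum>\<eta>\<in>incident S k \<xi> j. h \<eta>) \<partial>count_space (S k))
      = (\<integral>\<^sup>+\<xi>. \<integral>\<^sup>+\<eta>. indicator (incident S k \<xi> j) \<eta> * h \<eta> \<partial>count_space (S j) \<partial>count_space (S k))"
  proof (intro nn_integral_cong)
    fix \<xi>
    have "(\<integral>\<^sup>+\<eta>. indicator (incident S k \<xi> j) \<eta> * h \<eta> \<partial>count_space (S j))
        = (\<Sum>\<eta>\<in>incident S k \<xi> j. indicator (incident S k \<xi> j) \<eta> * h \<eta>)"
      by (rule nn_integral_count_space'[OF finite_incident]) (auto simp: incident_def)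
    then show "(\<Sum>\<eta>\<in>incident S k \<xi> j. h \<eta>)
        = (\<integral>\<^sup>+\<eta>. indicator (incident S k \<xi> j) \<eta> * h \<eta> \<partial>count_space (S j))" by simp
  qed
  also have "\<dots> = (\<integral>\<^sup>+\<eta>. \<integral>\<^sup>+\<xi>. indicator (incident S k \<xi> j) \<eta> * h \<eta> \<partial>count_space (S k) \<partial>count_space (S j))"
    by (rule nn_integral_count_space_nn_integral[OF countable_S]) simp
  also have "\<dots> \<le> (\<integral>\<^sup>+\<eta>. ennreal (overlap_bound (1 + 2^m)) * h \<eta> \<partial>count_space (S j))"
  proof (intro nn_integral_mono)
    fix \<eta>
    define A where "A = {\<xi> \<in> S k. \<eta> \<in> incident S k \<xi> j}"
    have fin: "finite A" and card: "real (card A) \<le> overlap_bound (1 + 2^m)"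
      using finite_card_incident_inverse[OF assms, of \<eta>] by (auto simp: A_def)
    have "(\<integral>\<^sup>+\<xi>. indicator (incident S k \<xi> j) \<eta> * h \<eta> \<partial>count_space (S k))
        = (\<Sum>\<xi>\<in>A. indicator (incident S k \<xi> j) \<eta> * h \<eta>)"
      by (rule nn_integral_count_space'[OF fin]) (auto simp: A_def indicator_def)
    also have "\<dots> = ennreal (real (card A)) * h \<eta>"
      by (simp add: A_def indicator_def ennreal_of_nat_eq_real_of_nat)
    finally show "(\<integral>\<^sup>+\<xi>. indicator (incident S k \<xi> j) \<eta> * h \<eta> \<partial>count_space (S k))
        \<le> ennreal (overlap_bound (1 + 2^m)) * h \<eta>"
      using card by (simp add: mult_right_mono ennreal_leI)
  qed
  finally show ?thesis by (simp add: nn_integral_cmult)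
qed

lemma nn_integral_mu_Tpart_powr_le_lt1:
  assumes "k - int m \<le> j" "0 < P" "P < 1"
  shows "(\<integral>\<^sup>+\<xi>. ennreal (mu k \<xi> * Tpart u k \<xi> j powr P) \<partial>count_space (S k))
    \<le> ennreal (ratio_const m powr (1 - P) * overlap_bound (1 + 2^m) * overlap_bound 1
        * 2 powr (real_of_int (j - k) * (Q * (1 - P)))) * (\<integral>\<^sup>+z. ennreal (level_sum u j z powr P) \<partial>M)"
proof -
  define G where "G = (ratio_const m * 2 powr (real_of_int (j - k) * Q)) powr (1 - P)"
  define h where "h \<eta> = ennreal (mu j \<eta> * cmod (u (j, \<eta>)) powr P)" for \<eta>
  have "(\<integral>\<^sup>+\<xi>. ennreal (mu k \<xi> * Tpart u k \<xi> j powr P) \<partial>count_space (S k))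
      \<le> (\<integral>\<^sup>+\<xi>. ennreal G * (\<Sum>\<eta>\<in>incident S k \<xi> j. h \<eta>) \<partial>count_space (S k))"
    using mu_Tpart_powr_le_lt1[OF assms]
    by (intro nn_integral_mono) (simp add: G_def h_def ennreal_mult[symmetric] ennreal_leI sum_nonneg)
  also have "\<dots> \<le> ennreal G * (ennreal (overlap_bound (1 + 2^m)) * (\<integral>\<^sup>+\<eta>. h \<eta> \<partial>count_space (S j)))"
    by (simp add: nn_integral_cmult mult_left_mono nn_integral_sum_incident_le[OF assms(1)])
  also have "\<dots> \<le> ennreal G * (ennreal (overlap_bound (1 + 2^m)) *
      (ennreal (overlap_bound 1) * (\<integral>\<^sup>+z. ennreal (level_sum u j z powr P) \<partial>M)))"
    unfolding h_def by (intro mult_left_mono nn_integral_mu_powr_le_level_sum assms) simp_all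
  also have "G = ratio_const m powr (1 - P) * 2 powr (real_of_int (j - k) * (Q * (1 - P)))"
    using ratio_const_pos[of m] by (simp add: G_def powr_mult powr_powr mult.assoc)
  finally show ?thesis
    using overlap_bound_pos[of 1] overlap_bound_pos[of "1 + 2^m"] ratio_const_pos[of m]
    by (simp add: ennreal_mult mult_ac)
qed

definition level_exp :: "real \<Rightarrow> real" where
  "level_exp P = (if 1 \<le> P then 0 else Q * (1 - P))"

definition level_const :: "nat \<Rightarrow> real \<Rightarrow> real" where
  "level_const m P = (if 1 \<le> P then vol_const m powr (P - 1) * overlap_bound (dilation m)
     else ratio_const m powr (1 - P) * overlap_bound (1 + 2^m) * overlap_bound 1)"

lemma level_const_pos: "0 < level_const m P"
  using vol_const_pos[of m] ratio_const_pos[of m] overlap_bound_pos[of 1]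
    overlap_bound_pos[of "dilation m"] overlap_bound_pos[of "1 + 2^m"] dilation_ge_1[of m]
  by (auto simp: level_const_def)

lemma nn_integral_mu_Tpart_powr_le:
  assumes "k - int m \<le> j" "0 < P"
  shows "(\<integral>\<^sup>+\<xi>. ennreal (mu k \<xi> * Tpart u k \<xi> j powr P) \<partial>count_space (S k))
    \<le> ennreal (level_const m P * 2 powr (real_of_int (j - k) * level_exp P)) *
      (\<integral>\<^sup>+z. ennreal (level_sum u j z powr P) \<partial>M)"
proof (cases "1 \<le> P")
  case True
  then show ?thesis
    using nn_integral_mu_Tpart_powr_le_ge1[OF assms(1) True] by (simp add: level_const_def level_exp_def)
next
  case False
  then show ?thesis
    using nn_integral_mu_Tpart_powr_le_lt1[OF assms(1,2), of u]
    by (simp add: level_const_def level_exp_def mult_ac)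
qed

lemma Tpart_level_powr_le_level_sum:
  assumes "k - int m \<le> j" "0 < P"
  shows "(\<integral>\<^sup>+z. ennreal (Tpart_level u k j z powr P) \<partial>M)
    \<le> ennreal (overlap_bound 1 powr P * level_const m P * 2 powr (real_of_int (j - k) * level_exp P)) *
      (\<integral>\<^sup>+z. ennreal (level_sum u j z powr P) \<partial>M)"
proof -
  have "(\<integral>\<^sup>+z. ennreal (Tpart_level u k j z powr P) \<partial>M) \<le> ennreal (overlap_bound 1 powr P) *
      (ennreal (level_const m P * 2 powr (real_of_int (j - k) * level_exp P)) *
      (\<integral>\<^sup>+z. ennreal (level_sum u j z powr P) \<partial>M))"
    by (rule order_trans[OF Tpart_level_powr_le[OF assms(2)]])
      (intro mult_left_mono nn_integral_mu_Tpart_powr_le assms; simp)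
  then show ?thesis using level_const_pos[of m P] by (simp add: ennreal_mult mult.assoc)
qed

lemma norm_le_esssup_level_fun:
  assumes "\<eta> \<in> S j"
  shows "ennreal (cmod (u (j, \<eta>))) \<le> esssup M (level_fun S u j)"
proof (rule ccontr)
  assume "\<not> ?thesis"
  then have lt: "esssup M (level_fun S u j) < ennreal (cmod (u (j, \<eta>)))" by simp
  have ge: "ennreal (cmod (u (j, \<eta>))) \<le> level_fun S u j z" if "z \<in> ball \<eta> (rad j)" for z
    using that nn_integral_ge_point[OF assms, of "\<lambda>\<eta>. ennreal (cmod (u (j, \<eta>))) * indicator (vball (j, \<eta>)) z"]
    by (simp add: level_fun_def vball_eq)
  have "AE z in M. z \<notin> ball \<eta> (rad j)"
    using esssup_AE[of "level_fun S u j" M] by eventually_elim (use ge lt in \<open>force dest: leD\<close>)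
  then have "ball \<eta> (rad j) \<in> null_sets M" by (subst AE_iff_null_sets) auto
  then have "emeasure M (ball \<eta> (rad j)) = 0" by auto
  with balls show False by (metis rad_pos less_irrefl)
qed

lemma Tpart_le_esssup:
  assumes "k - int m \<le> j"
  shows "ennreal (Tpart u k \<xi> j) \<le> ennreal (vol_const m) * esssup M (level_fun S u j)"
proof -
  let ?e = "esssup M (level_fun S u j)"
  have mx: "0 < mu k \<xi>" by (rule mu_pos)
  have "ennreal (Tpart u k \<xi> j) = (\<Sum>\<eta>\<in>incident S k \<xi> j. ennreal (mu j \<eta> / mu k \<xi>) * ennreal (cmod (u (j, \<eta>))))"
    unfolding ennreal_Tpart using mu_pos[of _ j] mx
    by (intro sum.cong) (simp_all add: ennreal_mult[symmetric])
  also have "\<dots> \<le> (\<Sum>\<eta>\<in>incident S k \<xi> j. ennreal (mu j \<eta> / mu k \<xi>) * ?e)"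
    by (intro sum_mono mult_left_mono norm_le_esssup_level_fun) (auto simp: incident_def)
  also have "\<dots> = ennreal ((\<Sum>\<eta>\<in>incident S k \<xi> j. mu j \<eta>) / mu k \<xi>) * ?e"
    using mu_pos by (simp add: sum_distrib_right[symmetric] sum_divide_distrib divide_nonneg_pos less_imp_le)
  also have "\<dots> \<le> ennreal (vol_const m) * ?e"
    using sum_mu_incident_le[OF assms, of \<xi>] mx by (intro mult_right_mono ennreal_leI) (auto simp: divide_le_eq)
  finally show ?thesis .
qed

lemma Tpart_level_le_esssup:
  assumes "k - int m \<le> j"
  shows "ennreal (Tpart_level u k j z) \<le> ennreal (overlap_bound 1 * vol_const m) * esssup M (level_fun S u j)"
proof -
  let ?e = "esssup M (level_fun S u j)"
  have "ennreal (Tpart_level u k j z) = (\<Sum>\<xi>\<in>S k \<inter> ball z (rad k). ennreal (Tpart u k \<xi> j))"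
    by (simp add: Tpart_level_def Tpart_nonneg)
  also have "\<dots> \<le> (\<Sum>\<xi>\<in>S k \<inter> ball z (rad k). ennreal (vol_const m) * ?e)"
    by (intro sum_mono Tpart_le_esssup assms)
  also have "\<dots> = ennreal (real (card (S k \<inter> ball z (rad k)))) * (ennreal (vol_const m) * ?e)"
    by (simp add: ennreal_of_nat_eq_real_of_nat)
  also have "\<dots> \<le> ennreal (overlap_bound 1) * (ennreal (vol_const m) * ?e)"
    by (intro mult_right_mono ennreal_leI card_S_ball_le) simp
  finally show ?thesis
    using overlap_bound_pos[of 1] vol_const_pos[of m] by (simp add: ennreal_mult mult.assoc)
qed

lemma dominated_level_Lp_le:
  fixes G :: "'a \<Rightarrow> ennreal"
  assumes P: "0 < P" and \<tau>: "0 < \<tau>" and K0: "0 \<le> K0"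
    and dom: "\<And>z. G z \<le> ennreal K0 * (\<integral>\<^sup>+j. ennreal (Tpart_level u k j z) \<partial>count_space {k - int m..})"
  shows "(\<integral>\<^sup>+z. epowr (G z) P \<partial>M)
    \<le> ennreal ((K0 * geom_const \<tau> m) powr P * (overlap_bound 1 powr P * level_const m P)) *
      (\<integral>\<^sup>+j. ennreal (2 powr (real_of_int (j - k) * (\<tau> * P + level_exp P))) *
        (\<integral>\<^sup>+z. ennreal (level_sum u j z powr P) \<partial>M) \<partial>count_space {k - int m..})"
proof -
  define A where "A = ennreal ((K0 * geom_const \<tau> m) powr P)"
  define B where "B = ennreal (overlap_bound 1 powr P * level_const m P)"
  define w where "w \<rho> j = ennreal (2 powr (real_of_int (j - k) * \<rho>))" for \<rho> j
  have pointwise: "epowr (G z) P \<le> A *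
      (\<integral>\<^sup>+j. w (\<tau> * P) j * ennreal (Tpart_level u k j z powr P) \<partial>count_space {k - int m..})" for z
  proof -
    have "epowr (G z) P \<le> epowr (ennreal K0 * (\<integral>\<^sup>+j. ennreal (Tpart_level u k j z) \<partial>count_space {k - int m..})) P"
      by (rule epowr_mono[OF dom]) (use P in simp)
    also have "\<dots> \<le> ennreal (K0 powr P) * (ennreal (geom_const \<tau> m powr P) *
        (\<integral>\<^sup>+j. w (\<tau> * P) j * ennreal (Tpart_level u k j z powr P) \<partial>count_space {k - int m..}))"
      unfolding epowr_mult epowr_ennreal[OF K0] w_def
      by (intro mult_left_mono epowr_nn_integral_le_geometric_weighted P \<tau> Tpart_level_nonneg) simp
    finally show ?thesis
      using K0 geom_const_pos[OF \<tau>, of m] by (simp add: A_def powr_mult ennreal_mult mult.assoc)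
  qed
  have levelwise: "(\<integral>\<^sup>+z. w (\<tau> * P) j * ennreal (Tpart_level u k j z powr P) \<partial>M)
      \<le> B * (w (\<tau> * P + level_exp P) j * (\<integral>\<^sup>+z. ennreal (level_sum u j z powr P) \<partial>M))"
    if j: "j \<in> {k - int m..}" for j
  proof -
    have "(\<integral>\<^sup>+z. w (\<tau> * P) j * ennreal (Tpart_level u k j z powr P) \<partial>M)
        \<le> w (\<tau> * P) j * (ennreal (overlap_bound 1 powr P * level_const m P *
          2 powr (real_of_int (j - k) * level_exp P)) * (\<integral>\<^sup>+z. ennreal (level_sum u j z powr P) \<partial>M))"
      using j Tpart_level_powr_le_level_sum[OF _ P, of k m j u]
      by (subst nn_integral_cmult) (auto intro: mult_left_mono)
    also have "\<dots> = B * (w (\<tau> * P + level_exp P) j * (\<integral>\<^sup>+z. ennreal (level_sum u j z powr P) \<partial>M))"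
      using level_const_pos[of m P]
      by (simp add: B_def w_def ennreal_mult[symmetric] powr_add[symmetric] algebra_simps)
    finally show ?thesis .
  qed
  have "(\<integral>\<^sup>+z. epowr (G z) P \<partial>M) \<le> A * (\<integral>\<^sup>+z. \<integral>\<^sup>+j. w (\<tau> * P) j *
      ennreal (Tpart_level u k j z powr P) \<partial>count_space {k - int m..} \<partial>M)"
    using pointwise by (subst nn_integral_cmult[symmetric])
      (auto intro: nn_integral_mono borel_measurable_nn_integral_count_space)
  also have "\<dots> = A * (\<integral>\<^sup>+j. \<integral>\<^sup>+z. w (\<tau> * P) j * ennreal (Tpart_level u k j z powr P) \<partial>M
      \<partial>count_space {k - int m..})"
    by (subst nn_integral_count_space_nn_integral) (auto simp: w_def)
  also have "\<dots> \<le> A * (B * (\<integral>\<^sup>+j. w (\<tau> * P + level_exp P) j *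
      (\<integral>\<^sup>+z. ennreal (level_sum u j z powr P) \<partial>M) \<partial>count_space {k - int m..}))"
    using levelwise by (subst nn_integral_cmult[symmetric]) (auto intro!: mult_left_mono nn_integral_mono)
  finally show ?thesis
    using level_const_pos[of m P] K0 geom_const_pos[OF \<tau>, of m]
    by (simp add: A_def B_def w_def ennreal_mult mult.assoc)
qed

lemma dominated_level_esssup_le:
  fixes G :: "'a \<Rightarrow> ennreal"
  assumes K0: "0 \<le> K0" and G: "G \<in> borel_measurable M"
    and dom: "\<And>z. G z \<le> ennreal K0 * (\<integral>\<^sup>+j. ennreal (Tpart_level u k j z) \<partial>count_space {k - int m..})"
  shows "esssup M G \<le> ennreal (K0 * (overlap_bound 1 * vol_const m)) *
    (\<integral>\<^sup>+j. esssup M (level_fun S u j) \<partial>count_space {k - int m..})"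
proof (rule esssup_I[OF G], rule AE_I2)
  fix z
  have "G z \<le> ennreal K0 * (\<integral>\<^sup>+j. ennreal (overlap_bound 1 * vol_const m) * esssup M (level_fun S u j)
      \<partial>count_space {k - int m..})"
    by (rule order_trans[OF dom]) (auto intro!: mult_left_mono nn_integral_mono Tpart_level_le_esssup)
  then show "G z \<le> ennreal (K0 * (overlap_bound 1 * vol_const m)) *
      (\<integral>\<^sup>+j. esssup M (level_fun S u j) \<partial>count_space {k - int m..})"
    using K0 overlap_bound_pos[of 1] vol_const_pos[of m] by (simp add: nn_integral_cmult ennreal_mult mult.assoc)
qed

section \<open>Summability and boundedness of \<open>T\<close>\<close>

lemma exponent_condition:
  assumes s: "0 < s" and p: "ennreal (Q / (Q + s)) < p" and p_fin: "p \<noteq> top"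
  shows "0 < enn2real p" "level_exp (enn2real p) < s * enn2real p"
proof -
  obtain P where P: "p = ennreal P" "0 \<le> P" using p_fin by (cases p) auto
  have QP: "Q / (Q + s) < P" using p P Q s by (simp add: ennreal_less_iff)
  moreover have "0 < Q / (Q + s)" using Q s by simp
  ultimately show pos: "0 < enn2real p" using P by simp
  have "Q < P * (Q + s)" using QP Q s by (simp add: divide_less_eq)
  then show "level_exp (enn2real p) < s * enn2real p"
    using P s pos by (auto simp: level_exp_def algebra_simps)
qed

lemma epowr_Lp_qnorm_level_fun:
  assumes "p \<noteq> top" "0 < enn2real p"
  shows "epowr (Lp_qnorm M p (level_fun S u j)) (enn2real p)
    = (\<integral>\<^sup>+z. ennreal (level_sum u j z powr enn2real p) \<partial>M)"
  using assms by (simp add: Lp_qnorm_def epowr_inverse_epowr level_fun_eq_level_sum epowr_ennreal level_sum_nonneg)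

definition op_const :: "real \<Rightarrow> ennreal \<Rightarrow> ennreal \<Rightarrow> real \<Rightarrow> nat \<Rightarrow> real" where
  "op_const s p q K0 m = (if p = top then hardy_const s q 1 (K0 * (overlap_bound 1 * vol_const m)) 0 m
     else (let P = enn2real p; \<tau> = (s * P - level_exp P) / (2 * P) in
       hardy_const s q P ((K0 * geom_const \<tau> m) powr P * (overlap_bound 1 powr P * level_const m P))
         (\<tau> * P + level_exp P) m))"

lemma op_const_nonneg: "0 \<le> op_const s p q K0 m"
  by (simp add: op_const_def Let_def hardy_const_def)

lemma I_norm_dominated_le:
  assumes s: "0 < s" and p: "ennreal (Q / (Q + s)) < p" and q: "0 < q" and K0: "0 \<le> K0"
    and dom: "\<And>k z. level_fun S w k z \<le> ennreal K0 *
      (\<integral>\<^sup>+j. ennreal (Tpart_level u k j z) \<partial>count_space {k - int m..})"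
  shows "I_norm M S s p q w \<le> ennreal (op_const s p q K0 m) * I_norm M S s p q u"
  unfolding I_norm_eq_seq_qnorm
proof (cases "p = top")
  case True
  show "seq_qnorm s q (\<lambda>k. Lp_qnorm M p (level_fun S w k))
      \<le> ennreal (op_const s p q K0 m) * seq_qnorm s q (\<lambda>k. Lp_qnorm M p (level_fun S u k))"
    unfolding op_const_def if_P[OF True]
  proof (rule seq_qnorm_hardy)
    show "epowr (Lp_qnorm M p (level_fun S w k)) 1 \<le> ennreal (K0 * (overlap_bound 1 * vol_const m)) *
        (\<integral>\<^sup>+j. ennreal (2 powr (real_of_int (j - k) * 0)) * epowr (Lp_qnorm M p (level_fun S u j)) 1
        \<partial>count_space {k - int m..})" for k
      using dominated_level_esssup_le[OF K0 borel_measurable_level_fun dom] True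
      by (simp add: Lp_qnorm_def)
  qed (use K0 overlap_bound_pos[of 1] vol_const_pos[of m] s q in auto)
next
  case False
  define P where "P = enn2real p"
  have P: "0 < P" and \<rho>: "level_exp P < s * P"
    using exponent_condition[OF s p False] by (simp_all add: P_def)
  define \<tau> where "\<tau> = (s * P - level_exp P) / (2 * P)"
  have \<tau>: "0 < \<tau>" using \<rho> P by (simp add: \<tau>_def)
  have \<tau>P: "\<tau> * P + level_exp P < s * P" using \<rho> P by (simp add: \<tau>_def field_simps)
  have Lp: "epowr (Lp_qnorm M p f) P = (\<integral>\<^sup>+z. epowr (f z) P \<partial>M)" for f
    using P False by (simp add: Lp_qnorm_def P_def epowr_inverse_epowr)
  show "seq_qnorm s q (\<lambda>k. Lp_qnorm M p (level_fun S w k))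
      \<le> ennreal (op_const s p q K0 m) * seq_qnorm s q (\<lambda>k. Lp_qnorm M p (level_fun S u k))"
    unfolding op_const_def Let_def P_def[symmetric] \<tau>_def[symmetric] if_not_P[OF False]
  proof (rule seq_qnorm_hardy[OF P _ \<tau>P q])
    show "epowr (Lp_qnorm M p (level_fun S w k)) P \<le> ennreal ((K0 * geom_const \<tau> m) powr P *
        (overlap_bound 1 powr P * level_const m P)) * (\<integral>\<^sup>+j. ennreal (2 powr (real_of_int (j - k) *
        (\<tau> * P + level_exp P))) * epowr (Lp_qnorm M p (level_fun S u j)) P \<partial>count_space {k - int m..})" for k
      using dominated_level_Lp_le[OF P \<tau> K0 dom] P False
      by (simp add: Lp P_def epowr_Lp_qnorm_level_fun level_fun_eq_level_sum epowr_ennreal level_sum_nonneg)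
  qed (use level_const_pos[of m P] in simp)
qed

lemma Tpart_le_Lp_qnorm_finite:
  assumes p: "p \<noteq> top" and P: "0 < enn2real p" and \<xi>: "\<xi> \<in> S k" and j: "k \<le> j"
  defines "P \<equiv> enn2real p"
  shows "ennreal (Tpart u k \<xi> j) \<le> ennreal ((level_const 0 P / mu k \<xi>) powr (1/P) *
    2 powr (real_of_int (j - k) * (level_exp P / P))) * Lp_qnorm M p (level_fun S u j)"
proof -
  define a where "a = Lp_qnorm M p (level_fun S u j)"
  define c where "c = level_const 0 P * 2 powr (real_of_int (j - k) * level_exp P)"
  have "ennreal (mu k \<xi>) * epowr (ennreal (Tpart u k \<xi> j)) P
      \<le> (\<integral>\<^sup>+\<xi>'. ennreal (mu k \<xi>' * Tpart u k \<xi>' j powr P) \<partial>count_space (S k))"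
    using nn_integral_ge_point[OF \<xi>, of "\<lambda>\<xi>'. ennreal (mu k \<xi>' * Tpart u k \<xi>' j powr P)"] mu_pos[of \<xi> k]
    by (simp add: epowr_ennreal Tpart_nonneg ennreal_mult)
  also have "\<dots> \<le> ennreal c * epowr a P"
    using nn_integral_mu_Tpart_powr_le[of k 0 j P u] j P p
    by (simp add: a_def c_def P_def epowr_Lp_qnorm_level_fun)
  finally have "ennreal (1 / mu k \<xi>) * (ennreal (mu k \<xi>) * epowr (ennreal (Tpart u k \<xi> j)) P)
      \<le> ennreal (1 / mu k \<xi>) * (ennreal c * epowr a P)"
    by (rule mult_left_mono) simp
  moreover have "epowr (ennreal ((level_const 0 P / mu k \<xi>) powr (1/P) *
      2 powr (real_of_int (j - k) * (level_exp P / P)))) P = ennreal (1 / mu k \<xi>) * ennreal c"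
    using P mu_pos[of \<xi> k] level_const_pos[of 0 P]
    by (simp add: c_def P_def epowr_ennreal powr_mult powr_powr powr_divide ennreal_mult[symmetric])
  ultimately have "epowr (ennreal (Tpart u k \<xi> j)) P \<le> epowr (ennreal ((level_const 0 P / mu k \<xi>) powr (1/P) *
      2 powr (real_of_int (j - k) * (level_exp P / P)))) P * epowr a P"
    using mu_pos[of \<xi> k] by (simp add: mult.assoc[symmetric] ennreal_mult[symmetric])
  then show ?thesis
    using P by (simp add: epowr_le_iff a_def P_def flip: epowr_mult)
qed

lemma Tpart_le_Lp_qnorm:
  assumes s: "0 < s" and p: "ennreal (Q / (Q + s)) < p" and \<xi>: "\<xi> \<in> S k"
  obtains c \<theta> where "0 \<le> c" "\<theta> < s"
    and "\<And>j. k \<le> j \<Longrightarrow> ennreal (Tpart u k \<xi> j)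
      \<le> ennreal (c * 2 powr (real_of_int (j - k) * \<theta>)) * Lp_qnorm M p (level_fun S u j)"
proof (cases "p = top")
  case True
  show ?thesis
    by (rule that[of "vol_const 0" 0]) (use s vol_const_pos[of 0] Tpart_le_esssup[of k 0]
        True in \<open>auto simp: Lp_qnorm_def\<close>)
next
  case False
  define P where "P = enn2real p"
  have P: "0 < P" and \<rho>: "level_exp P < s * P"
    using exponent_condition[OF s p False] by (simp_all add: P_def)
  show ?thesis
  proof (rule that[of "(level_const 0 P / mu k \<xi>) powr (1/P)" "level_exp P / P"])
    show "level_exp P / P < s" using \<rho> P by (simp add: divide_less_eq mult.commute)
  qed (use Tpart_le_Lp_qnorm_finite[OF False _ \<xi>] P in \<open>simp_all add: P_def\<close>)
qed

lemma nn_integral_Tpart_finite: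
  assumes s: "0 < s" and p: "ennreal (Q / (Q + s)) < p" and q: "0 < q"
    and fin: "I_norm M S s p q u < \<infinity>" and \<xi>: "\<xi> \<in> S k"
  shows "(\<integral>\<^sup>+j. ennreal (Tpart u k \<xi> j) \<partial>count_space {k..}) < \<infinity>"
proof -
  obtain c \<theta> where c: "0 \<le> c" and \<theta>: "\<theta> < s" and bound: "\<And>j. k \<le> j \<Longrightarrow> ennreal (Tpart u k \<xi> j)
      \<le> ennreal (c * 2 powr (real_of_int (j - k) * \<theta>)) * Lp_qnorm M p (level_fun S u j)"
    using Tpart_le_Lp_qnorm[OF s p \<xi>] by blast
  define I where "I = I_norm M S s p q u"
  define c' where "c' = c * 2 powr (- real_of_int k * s)"
  have "ennreal (Tpart u k \<xi> j) \<le> ennreal c' * I * ennreal (2 powr (- (s - \<theta>) * real_of_int (j - k)))"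
    if j: "j \<in> {k..}" for j
  proof -
    have "c * 2 powr (real_of_int (j - k) * \<theta>)
        = c' * 2 powr (- (s - \<theta>) * real_of_int (j - k)) * 2 powr (real_of_int j * s)"
      by (simp add: c'_def powr_add[symmetric] algebra_simps)
    moreover have "0 \<le> c'" using c by (simp add: c'_def)
    ultimately have "ennreal (c * 2 powr (real_of_int (j - k) * \<theta>)) * Lp_qnorm M p (level_fun S u j)
        = ennreal c' * ennreal (2 powr (- (s - \<theta>) * real_of_int (j - k))) *
          (ennreal (2 powr (real_of_int j * s)) * Lp_qnorm M p (level_fun S u j))"
      by (simp add: ennreal_mult mult.assoc)
    also have "\<dots> \<le> ennreal c' * ennreal (2 powr (- (s - \<theta>) * real_of_int (j - k))) * I"
      unfolding I_def I_norm_eq_seq_qnorm by (intro mult_left_mono seq_qnorm_term_le q) simp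
    finally show ?thesis using bound[of j] j by (simp add: mult_ac order_trans)
  qed
  then have "(\<integral>\<^sup>+j. ennreal (Tpart u k \<xi> j) \<partial>count_space {k - int 0..})
      \<le> ennreal c' * I * (\<integral>\<^sup>+j. ennreal (2 powr (- (s - \<theta>) * real_of_int (j - k))) \<partial>count_space {k - int 0..})"
    by (subst nn_integral_cmult[symmetric]) (auto intro!: nn_integral_mono)
  also have "\<dots> = ennreal c' * I * ennreal (geom_const (s - \<theta>) 0)"
    using \<theta> by (simp only: nn_integral_geometric_atLeast)
  also have "\<dots> < \<infinity>"
    using fin by (simp add: I_def ennreal_mult_less_top)
  finally show ?thesis by simp
qed

lemma Tnbhd_mem: "(j, \<eta>) \<in> Tnbhd S (k, \<xi>) \<longleftrightarrow> k \<le> j \<and> \<eta> \<in> incident S k \<xi> j"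
  by (auto simp: Tnbhd_def filling_def incident_def vball_eq)

lemma norm_Tterm: "cmod (Tterm M u (k, \<xi>) (j, \<eta>)) = (mu j \<eta> / mu k \<xi>) * cmod (u (j, \<eta>))"
proof -
  have "0 \<le> mu j \<eta> / mu k \<xi>" using mu_pos[of \<eta> j] mu_pos[of \<xi> k] by simp
  then show ?thesis unfolding Tterm_def vball_eq norm_mult norm_of_real by simp
qed

lemma nn_integral_norm_Tterm:
  "(\<integral>\<^sup>+y. ennreal (cmod (Tterm M u (k, \<xi>) y)) \<partial>count_space (Tnbhd S (k, \<xi>)))
   = (\<integral>\<^sup>+j. ennreal (Tpart u k \<xi> j) \<partial>count_space {k..})"
proof -
  define f where "f y = ennreal (cmod (Tterm M u (k, \<xi>) y)) * indicator (Tnbhd S (k, \<xi>)) y" for y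
  have level: "(\<integral>\<^sup>+\<eta>. f (j, \<eta>) \<partial>count_space UNIV) = ennreal (Tpart u k \<xi> j) * indicator {k..} j" for j
  proof (cases "k \<le> j")
    case True
    have "(\<integral>\<^sup>+\<eta>. f (j, \<eta>) \<partial>count_space UNIV) = (\<Sum>\<eta>\<in>incident S k \<xi> j. f (j, \<eta>))"
      by (rule nn_integral_count_space'[OF finite_incident]) (auto simp: f_def Tnbhd_mem)
    also have "\<dots> = ennreal (Tpart u k \<xi> j)"
      using True by (simp add: ennreal_Tpart f_def Tnbhd_mem norm_Tterm)
    finally show ?thesis using True by simp
  qed (simp add: f_def Tnbhd_mem)
  have "(\<integral>\<^sup>+y. ennreal (cmod (Tterm M u (k, \<xi>) y)) \<partial>count_space (Tnbhd S (k, \<xi>)))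
      = (\<integral>\<^sup>+j. \<integral>\<^sup>+\<eta>. f (j, \<eta>) \<partial>count_space UNIV \<partial>count_space UNIV)"
    unfolding f_def by (subst nn_integral_count_space_indicator)
      (simp_all add: nn_integral_fst_count_space[symmetric])
  also have "\<dots> = (\<integral>\<^sup>+j. ennreal (Tpart u k \<xi> j) \<partial>count_space {k..})"
    by (simp add: level nn_integral_count_space_indicator)
  finally show ?thesis .
qed

lemma norm_T_op_le:
  assumes "\<xi> \<in> S k"
  shows "ennreal (cmod (T_op M S u (k, \<xi>))) \<le> ennreal 1 * (\<integral>\<^sup>+j. ennreal (Tpart u k \<xi> j) \<partial>count_space {k - int 0..})"
  using assms norm_infsum_le_nn_integral[of "Tterm M u (k, \<xi>)" "Tnbhd S (k, \<xi>)"]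
  by (simp add: T_op_def filling_def nn_integral_norm_Tterm)

lemma level_fun_dominated:
  assumes K0: "0 \<le> K0"
    and pointwise: "\<And>\<xi>. \<xi> \<in> S k \<Longrightarrow> ennreal (cmod (w (k, \<xi>))) \<le> ennreal K0 *
      (\<integral>\<^sup>+j. ennreal (Tpart u k \<xi> j) \<partial>count_space J)"
  shows "level_fun S w k z \<le> ennreal K0 * (\<integral>\<^sup>+j. ennreal (Tpart_level u k j z) \<partial>count_space J)"
proof -
  have "level_fun S w k z \<le> (\<integral>\<^sup>+\<xi>. ennreal K0 * ((\<integral>\<^sup>+j. ennreal (Tpart u k \<xi> j) \<partial>count_space J) *
      indicator (ball \<xi> (rad k)) z) \<partial>count_space (S k))"
    unfolding level_fun_def vball_eq
    by (intro nn_integral_mono) (simp add: pointwise mult_right_mono flip: mult.assoc)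
  also have "\<dots> = ennreal K0 * (\<integral>\<^sup>+j. \<integral>\<^sup>+\<xi>. ennreal (Tpart u k \<xi> j) * indicator (ball \<xi> (rad k)) z
      \<partial>count_space (S k) \<partial>count_space J)"
    by (simp add: nn_integral_cmult nn_integral_multc[symmetric]
        nn_integral_count_space_nn_integral[OF countable_S])
  finally show ?thesis by (simp add: ennreal_Tpart_level)
qed

lemma level_fun_comp_le:
  assumes \<Psi>: "\<forall>x\<in>filling S. \<Psi> x \<in> filling S" "\<forall>x\<in>filling S. vball (\<Psi> x) \<inter> vball x \<noteq> {}"
    "\<forall>x\<in>filling S. real_of_int \<bar>fst (\<Psi> x) - fst x\<bar> \<le> \<sigma>"
    and m: "m = nat (ceiling \<sigma>)"
  shows "level_fun S (v \<circ> \<Psi>) k z \<le> ennreal (ratio_const m * 2 powr (real m * Q)) *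
    (\<integral>\<^sup>+j. ennreal (Tpart_level v k j z) \<partial>count_space {k - int m..})"
proof (rule level_fun_dominated)
  show K: "0 \<le> ratio_const m * 2 powr (real m * Q)" using ratio_const_pos[of m] by simp
  fix \<xi> assume "\<xi> \<in> S k"
  then have x: "(k, \<xi>) \<in> filling S" by (simp add: filling_def)
  obtain j \<eta> where eq: "\<Psi> (k, \<xi>) = (j, \<eta>)" by fastforce
  have "\<Psi> (k, \<xi>) \<in> filling S" "vball (\<Psi> (k, \<xi>)) \<inter> vball (k, \<xi>) \<noteq> {}"
    using \<Psi>(1,2) x by blast+
  then have \<eta>: "\<eta> \<in> incident S k \<xi> j"
    using eq by (simp add: filling_def incident_def vball_eq)
  have "real_of_int \<bar>j - k\<bar> \<le> \<sigma>" using \<Psi>(3) x eq by force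
  then have jl: "k - int m \<le> j" and ju: "j - k \<le> int m" using m by linarith+
  have "mu k \<xi> \<le> ratio_const m * 2 powr (real_of_int (j - k) * Q) * mu j \<eta>"
    using mu_le_incident[OF jl \<eta>] by (simp add: ratio_const_def mult.assoc)
  also have "\<dots> \<le> ratio_const m * 2 powr (real m * Q) * mu j \<eta>"
    using ju Q ratio_const_pos[of m] mu_pos[of \<eta> j] by (intro mult_right_mono mult_left_mono powr_mono) auto
  finally have r: "1 \<le> ratio_const m * 2 powr (real m * Q) * (mu j \<eta> / mu k \<xi>)"
    using mu_pos[of \<xi> k] by (simp add: field_simps)
  then have "cmod (v (j, \<eta>)) \<le> ratio_const m * 2 powr (real m * Q) * ((mu j \<eta> / mu k \<xi>) * cmod (v (j, \<eta>)))"
    using mult_right_mono[OF r norm_ge_zero[of "v (j, \<eta>)"]] by (simp add: mult.assoc)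
  also have "(mu j \<eta> / mu k \<xi>) * cmod (v (j, \<eta>)) \<le> Tpart v k \<xi> j"
    unfolding Tpart_def using \<eta> mu_pos
    by (intro member_le_sum finite_incident) (auto intro!: mult_nonneg_nonneg divide_nonneg_pos)
  finally have "ennreal (cmod ((v \<circ> \<Psi>) (k, \<xi>))) \<le> ennreal (ratio_const m * 2 powr (real m * Q)) * ennreal (Tpart v k \<xi> j)"
    using eq K by (simp add: ennreal_mult[symmetric] Tpart_nonneg ennreal_leI mult_left_mono)
  also have "\<dots> \<le> ennreal (ratio_const m * 2 powr (real m * Q)) * (\<integral>\<^sup>+j. ennreal (Tpart v k \<xi> j) \<partial>count_space {k - int m..})"
    using jl by (intro mult_left_mono nn_integral_ge_point) auto
  finally show "ennreal (cmod ((v \<circ> \<Psi>) (k, \<xi>))) \<le> ennreal (ratio_const m * 2 powr (real m * Q)) *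
      (\<integral>\<^sup>+j. ennreal (Tpart v k \<xi> j) \<partial>count_space {k - int m..})" .
qed

lemma Tterm_summable_on:
  assumes s: "0 < s" and p: "ennreal (Q / (Q + s)) < p" and q: "0 < q"
    and fin: "I_norm M S s p q u < \<infinity>" and x: "x \<in> filling S"
  shows "Tterm M u x summable_on Tnbhd S x"
proof -
  obtain k \<xi> where x_eq: "x = (k, \<xi>)" and \<xi>: "\<xi> \<in> S k" using x by (auto simp: filling_def)
  show ?thesis unfolding x_eq
    using nn_integral_Tpart_finite[OF s p q fin \<xi>]
    by (intro summable_on_and_norm_infsum_le_nn_integral(1)) (simp add: nn_integral_norm_Tterm)
qed

lemma I_norm_T_op_le:
  assumes "0 < s" "ennreal (Q / (Q + s)) < p" "0 < q"
  shows "I_norm M S s p q (T_op M S u) \<le> ennreal (op_const s p q 1 0) * I_norm M S s p q u"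
  by (rule I_norm_dominated_le[OF assms]) (simp, rule level_fun_dominated[OF _ norm_T_op_le], simp_all)

lemma I_norm_T_op_comp_le:
  assumes s: "0 < s" and p: "ennreal (Q / (Q + s)) < p" and q: "0 < q"
    and \<Psi>: "\<forall>x\<in>filling S. \<Psi> x \<in> filling S" "\<forall>x\<in>filling S. vball (\<Psi> x) \<inter> vball x \<noteq> {}"
      "\<forall>x\<in>filling S. real_of_int \<bar>fst (\<Psi> x) - fst x\<bar> \<le> \<sigma>"
  defines "m \<equiv> nat (ceiling \<sigma>)"
  shows "I_norm M S s p q (T_op M S u \<circ> \<Psi>)
    \<le> ennreal (op_const s p q (ratio_const m * 2 powr (real m * Q)) m * op_const s p q 1 0) * I_norm M S s p q u"
proof -
  have "I_norm M S s p q (T_op M S u \<circ> \<Psi>)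
      \<le> ennreal (op_const s p q (ratio_const m * 2 powr (real m * Q)) m) * I_norm M S s p q (T_op M S u)"
    using ratio_const_pos[of m]
    by (intro I_norm_dominated_le[OF s p q] level_fun_comp_le[OF \<Psi>]) (simp_all add: m_def)
  also have "\<dots> \<le> ennreal (op_const s p q (ratio_const m * 2 powr (real m * Q)) m) *
      (ennreal (op_const s p q 1 0) * I_norm M S s p q u)"
    by (intro mult_left_mono I_norm_T_op_le[OF s p q]) simp
  finally show ?thesis by (simp add: op_const_nonneg ennreal_mult mult.assoc)
qed

end

theorem proposition2p4:
  fixes M :: "'a::metric_space measure" and S :: "int \<Rightarrow> 'a set"
    and C Q s :: real and p q :: ennreal
  assumes borel: "sets M = sets borel"
    and balls: "\<forall>\<xi> r. 0 < r \<longrightarrow> 0 < emeasure M (ball \<xi> r) \<and> emeasure M (ball \<xi> r) < \<infinity>"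
    and C: "1 \<le> C" and Q: "0 < Q"
    and doubling: "\<forall>\<xi> r t. 0 < r \<and> 1 \<le> t \<longrightarrow>
        measure M (ball \<xi> (t * r)) \<le> C * t powr Q * measure M (ball \<xi> r)"
    and filling: "\<forall>n. maximal_separated (2 powr (- real_of_int n - 1)) (S n)"
    and s: "0 < s"
    and p: "ennreal (Q / (Q + s)) < p"
    and q: "0 < q"
  shows "(\<forall>u. I_norm M S s p q u < \<infinity> \<longrightarrow>
            (\<forall>x\<in>filling S. Tterm M u x summable_on Tnbhd S x))
       \<and> (\<exists>K. \<forall>u. I_norm M S s p q u < \<infinity> \<longrightarrow>
            I_norm M S s p q (T_op M S u) \<le> ennreal K * I_norm M S s p q u)
       \<and> (\<forall>\<Psi> \<sigma>. (\<forall>x\<in>filling S. \<Psi> x \<in> filling S)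
               \<and> (\<forall>x\<in>filling S. vball (\<Psi> x) \<inter> vball x \<noteq> {})
               \<and> 0 \<le> \<sigma> \<and> (\<forall>x\<in>filling S. real_of_int \<bar>fst (\<Psi> x) - fst x\<bar> \<le> \<sigma>)
             \<longrightarrow> (\<forall>u. I_norm M S s p q u < \<infinity> \<longrightarrow>
                    (\<forall>x\<in>filling S. Tterm M u (\<Psi> x) summable_on Tnbhd S (\<Psi> x)))
               \<and> (\<exists>K. \<forall>u. I_norm M S s p q u < \<infinity> \<longrightarrow>
                    I_norm M S s p q (T_op M S u \<circ> \<Psi>) \<le> ennreal K * I_norm M S s p q u))"
proof -
  interpret doubling_filling M S C Q
    using borel balls C Q doubling filling by unfold_locales (auto simp: maximal_separated_def)
  show ?thesis
    using Tterm_summable_on[OF s p q] I_norm_T_op_le[OF s p q] I_norm_T_op_comp_le[OF s p q]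
    by blast
qed

end
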